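(* Let $Z$ be a continuous-time Markov chain on $\mathbb Z^d_{\ge 0}$ associated with a finite set of reactions $\bar y_u\to\bar y'_u$, where $\bar y_u,\bar y'_u\in\mathbb Z^d_{\ge0}$. The chain jumps from $x$ to $x+\bar y'_u-\bar y_u$ with mass-action intensity $\bar\lambda_u(x)=\bar\kappa_u x^{(\bar y_u)}$, where $\bar\kappa_u>0$, and starts at a fixed state $Z(0)=z^0_\ell$. Assume that $Z$ is irreducible and admits a stationary distribution $\pi$ with $$\sum_{x\in\mathbb Z^d_{\ge0}}\sum_u\bar\lambda_u(x)^2\pi(x)<\infty.$$ Let $J(t)$ be the number of jumps of $Z$ in $[0,t]$. Then there exists a constant $c$ such that $E(J(t)^2)\le c\max\{1,t^2\}$ for all $t\ge 0$.
   Context: Notation: $x^{(y)}=\prod_i x_i^{(y_i)}$, where $n^{(k)}=n(n-1)\cdots(n-k+1)$ when $n\ge k$ and $n^{(k)}=0$ otherwise. *)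

theory Defs
  imports "HOL-Probability.Probability"
begin

text \<open>Falling factorial n^(k) = n(n-1)...(n-k+1), which is 0 when n < k.\<close>
definition ffall :: "nat \<Rightarrow> nat \<Rightarrow> real" where
  "ffall n k = (\<Prod>i<k. real n - real i)"

definition ma_rate :: "('u \<Rightarrow> real) \<Rightarrow> ('u \<Rightarrow> 'd::finite \<Rightarrow> nat) \<Rightarrow> 'u \<Rightarrow> ('d \<Rightarrow> nat) \<Rightarrow> real" where
  "ma_rate \<kappa> y u x = \<kappa> u * (\<Prod>i\<in>UNIV. ffall (x i) (y u i))"

definition moving :: "'u set \<Rightarrow> ('u \<Rightarrow> 'd::finite \<Rightarrow> nat) \<Rightarrow> ('u \<Rightarrow> 'd \<Rightarrow> nat) \<Rightarrow> 'u set" where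
  "moving U y y' = {u\<in>U. y u \<noteq> y' u}"

definition total_rate :: "'u set \<Rightarrow> ('u \<Rightarrow> real) \<Rightarrow> ('u \<Rightarrow> 'd::finite \<Rightarrow> nat) \<Rightarrow> ('u \<Rightarrow> 'd \<Rightarrow> nat)
    \<Rightarrow> ('d \<Rightarrow> nat) \<Rightarrow> real" where
  "total_rate U \<kappa> y y' x = (\<Sum>u\<in>moving U y y'. ma_rate \<kappa> y u x)"

definition react_step :: "'u set \<Rightarrow> ('u \<Rightarrow> real) \<Rightarrow> ('u \<Rightarrow> 'd::finite \<Rightarrow> nat) \<Rightarrow> ('u \<Rightarrow> 'd \<Rightarrow> nat)
    \<Rightarrow> ('d \<Rightarrow> nat) \<Rightarrow> ('d \<Rightarrow> nat) \<Rightarrow> bool" where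
  "react_step U \<kappa> y y' x x' =
     (\<exists>u\<in>moving U y y'. ma_rate \<kappa> y u x > 0 \<and> x' = (\<lambda>i. x i - y u i + y' u i))"

definition jump_prob :: "'u set \<Rightarrow> ('u \<Rightarrow> real) \<Rightarrow> ('u \<Rightarrow> 'd::finite \<Rightarrow> nat) \<Rightarrow> ('u \<Rightarrow> 'd \<Rightarrow> nat)
    \<Rightarrow> ('d \<Rightarrow> nat) \<Rightarrow> ('d \<Rightarrow> nat) \<Rightarrow> real" where
  "jump_prob U \<kappa> y y' x x' =
     (if total_rate U \<kappa> y y' x = 0 then (if x' = x then 1 else 0)
      else (\<Sum>u\<in>{u\<in>moving U y y'. (\<lambda>i. x i - y u i + y' u i) = x'}. ma_rate \<kappa> y u x)
           / total_rate U \<kappa> y y' x)"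

text \<open>pi is a stationary distribution supported on S (global balance pi Q = 0).\<close>
definition ctmc_stationary :: "'u set \<Rightarrow> ('u \<Rightarrow> real) \<Rightarrow> ('u \<Rightarrow> 'd::finite \<Rightarrow> nat) \<Rightarrow> ('u \<Rightarrow> 'd \<Rightarrow> nat)
    \<Rightarrow> ('d \<Rightarrow> nat) set \<Rightarrow> (('d \<Rightarrow> nat) \<Rightarrow> real) \<Rightarrow> bool" where
  "ctmc_stationary U \<kappa> y y' S \<pi> =
     ((\<forall>x. 0 \<le> \<pi> x) \<and> (\<forall>x. x \<notin> S \<longrightarrow> \<pi> x = 0) \<and> (\<pi> has_sum 1) UNIV \<and>
      (\<forall>x. \<pi> x * total_rate U \<kappa> y y' x =
         (\<Sum>u\<in>moving U y y'. if (\<forall>i. y' u i \<le> x i)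
            then \<pi> (\<lambda>i. x i - y' u i + y u i) * ma_rate \<kappa> y u (\<lambda>i. x i - y' u i + y u i)
            else 0)))"

text \<open>Jump-chain / holding-time description of the CTMC started at z0:
  Y n is the state after the n-th jump, H n the holding time in Y n (possibly infinite).\<close>
definition ctmc_jump_hold :: "'w measure \<Rightarrow> 'u set \<Rightarrow> ('u \<Rightarrow> real) \<Rightarrow> ('u \<Rightarrow> 'd::finite \<Rightarrow> nat)
    \<Rightarrow> ('u \<Rightarrow> 'd \<Rightarrow> nat) \<Rightarrow> ('d \<Rightarrow> nat) \<Rightarrow> (nat \<Rightarrow> 'w \<Rightarrow> ('d \<Rightarrow> nat)) \<Rightarrow> (nat \<Rightarrow> 'w \<Rightarrow> ennreal) \<Rightarrow> bool" where
  "ctmc_jump_hold M U \<kappa> y y' z0 Y H =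
     ((\<forall>n. Y n \<in> measurable M (count_space UNIV)) \<and> (\<forall>n. H n \<in> borel_measurable M) \<and>
      (\<forall>n x s. (\<forall>i. 0 \<le> s i) \<longrightarrow>
         measure M {\<omega>\<in>space M. (\<forall>i\<le>n. Y i \<omega> = x i) \<and> (\<forall>i\<le>n. ennreal (s i) < H i \<omega>)}
         = (if x 0 = z0 then 1 else 0)
           * (\<Prod>i<n. jump_prob U \<kappa> y y' (x i) (x (Suc i)))
           * (\<Prod>i\<le>n. exp (- total_rate U \<kappa> y y' (x i) * s i))))"

text \<open>J(t): number of jumps in [0,t]; the (n+1)-st jump time is H 0 + ... + H n.\<close>
definition num_jumps :: "(nat \<Rightarrow> 'w \<Rightarrow> ennreal) \<Rightarrow> real \<Rightarrow> 'w \<Rightarrow> ennreal" where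
  "num_jumps H t \<omega> = (\<Sum>n. if (\<Sum>i\<le>n. H i \<omega>) \<le> ennreal t then 1 else 0)"

end

theory Submission
  imports Defs "HOL-Real_Asymp.Real_Asymp"
begin

(* Work with the Laplace transform in time. With S_n = H_0 + ... + H_n the time of the
   (n+1)-st jump, J(s)^2 = sum_n (2n+1) [S_n <= s], hence for theta > 0

     int_0^oo theta e^(-theta s) E J(s)^2 ds = sum_n (2n+1) E e^(-theta S_n).

   Conditioning on the path of the jump chain turns E e^(-theta S_n) into (R^n g)(z0), where
   R(x,x') = Q(x,x')/(q(x)+theta) is the jump kernel of the chain killed at rate theta and
   g = q/(q+theta). Weighting with the stationary distribution and using pi Q = pi q gives

     theta^2 sum_n (2n+1) sum_x pi(x) (R^n g)(x) <= theta sum_x pi q + 2 sum_x pi q^2,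

   which is finite by the second moment assumption. Since pi(z0) > 0 by irreducibility and
   E J(s)^2 is nondecreasing in s, the choice theta = 1/max(1,t) gives
   E J(t)^2 <= e max(1,t^2) (sum_x pi q + 2 sum_x pi q^2) / pi(z0). *)

section \<open>Sums of nonnegative extended reals\<close>

abbreviation count_sum :: "('a \<Rightarrow> ennreal) \<Rightarrow> ennreal" where
  "count_sum f \<equiv> \<integral>\<^sup>+x. f x \<partial>count_space UNIV"

lemma count_sum_swap:
  fixes f :: "'a::countable \<Rightarrow> 'b::countable \<Rightarrow> ennreal"
  shows "count_sum (\<lambda>x. count_sum (f x)) = count_sum (\<lambda>y. count_sum (\<lambda>x. f x y))"
  by (rule nn_integral_count_space_nn_integral) auto

lemma count_sum_less_top_of_summable_on:
  fixes f :: "'a \<Rightarrow> real"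
  assumes "f summable_on UNIV" "\<And>x. 0 \<le> f x"
  shows "count_sum (\<lambda>x. ennreal (f x)) < \<top>"
proof -
  have "Infinite_Sum.abs_summable_on f UNIV"
    using assms summable_on_iff_abs_summable_on_real by blast
  then have "Infinite_Set_Sum.abs_summable_on f UNIV"
    using abs_summable_equivalent by blast
  then show ?thesis
    using assms(2) by (simp add: nn_integral_conv_infsetsum)
qed

lemma suminf_swap_ennreal:
  fixes f :: "nat \<Rightarrow> nat \<Rightarrow> ennreal"
  shows "(\<Sum>i. \<Sum>j. f i j) = (\<Sum>j. \<Sum>i. f i j)"
  using count_sum_swap[of f] by (simp add: nn_integral_count_space_nat)

lemma suminf_one_ennreal: "(\<Sum>n::nat. 1 :: ennreal) = \<top>"
  by (simp flip: nn_integral_count_space_nat)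

lemma sum_odd_eq_square: "(\<Sum>n<k. 2 * of_nat n + 1 :: ennreal) = of_nat k ^ 2"
proof (induction k)
  case (Suc k)
  have "(of_nat k :: ennreal) ^ 2 + (2 * of_nat k + 1) = of_nat (k ^ 2 + 2 * k + 1)"
    by (simp add: of_nat_add of_nat_mult power2_eq_square)
  also have "k ^ 2 + 2 * k + 1 = (Suc k) ^ 2"
    by (simp add: power2_eq_square)
  finally show ?case using Suc by (simp add: of_nat_power)
qed simp

lemma square_count_of_downclosed:
  assumes downclosed: "\<And>n. P (Suc n) \<Longrightarrow> P n"
  shows "(\<Sum>n. if P n then 1 else 0 :: ennreal) ^ 2
      = (\<Sum>n. (2 * of_nat n + 1) * (if P n then 1 else 0))"
proof (cases "\<forall>n. P n")
  case True
  have "(\<Sum>n. 1 :: ennreal) \<le> (\<Sum>n. (2 * of_nat n + 1) * (if P n then 1 else 0))"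
    using True by (intro suminf_le) auto
  with True show ?thesis by (simp add: suminf_one_ennreal top_unique power2_eq_square)
next
  case False
  define k where "k = (LEAST n. \<not> P n)"
  have P_iff: "P n \<longleftrightarrow> n < k" for n
  proof
    assume "P n"
    have not_P: "\<not> P m" if "k \<le> m" for m
      using that
    proof (induction m rule: dec_induct)
      case base then show ?case using False unfolding k_def by (metis LeastI)
    qed (use downclosed in blast)
    from not_P[of n] \<open>P n\<close> show "n < k" by linarith
  next
    assume "n < k"
    then show "P n" unfolding k_def using not_less_Least by blast
  qed
  have "(\<Sum>n. if P n then 1 else 0 :: ennreal) = of_nat k"
    by (subst suminf_finite[of "{..<k}"]) (auto simp: P_iff)
  moreover have "(\<Sum>n. (2 * of_nat n + 1) * (if P n then 1 else 0 :: ennreal))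
      = (\<Sum>n<k. 2 * of_nat n + 1)"
    by (subst suminf_finite[of "{..<k}"]) (auto simp: P_iff)
  ultimately show ?thesis by (simp add: sum_odd_eq_square)
qed

lemma suminf_of_nat_times:
  fixes a :: "nat \<Rightarrow> ennreal"
  shows "(\<Sum>n. of_nat n * a n) = (\<Sum>m. \<Sum>j. a (j + Suc m))"
proof -
  have count: "of_nat n * a n = (\<Sum>m. if m < n then a n else 0)" for n
    by (subst suminf_finite[of "{..<n}"]) auto
  have shift: "(\<Sum>n. if m < n then a n else 0) = (\<Sum>j. a (j + Suc m))" for m
    using suminf_offset[of "\<lambda>n. if m < n then a n else 0" "Suc m"] by simp
  have "(\<Sum>n. of_nat n * a n) = (\<Sum>n. \<Sum>m. if m < n then a n else 0)"
    by (simp only: count)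
  also have "\<dots> = (\<Sum>m. \<Sum>n. if m < n then a n else 0)"
    by (rule suminf_swap_ennreal)
  finally show ?thesis
    by (simp only: shift)
qed

lemma prod_one_minus:
  fixes f :: "'a \<Rightarrow> 'b::comm_ring_1"
  assumes "finite A"
  shows "(\<Prod>i\<in>A. 1 - f i) = (\<Sum>S\<in>Pow A. (- 1) ^ card S * (\<Prod>i\<in>S. f i))"
  using prod_add[OF assms, of "\<lambda>i. - f i" "\<lambda>_. 1"] by (simp add: prod_uminus)

section \<open>Exponential densities\<close>

lemma nn_integral_exp_tail:
  assumes "0 < c"
  shows "(\<integral>\<^sup>+\<sigma>. ennreal (c * exp (- c * \<sigma>)) * indicator {a..} \<sigma> \<partial>lborel) = ennreal (exp (- c * a))"
proof -
  have "(\<integral>\<^sup>+\<sigma>. ennreal (c * exp (- c * \<sigma>)) * indicator {a..} \<sigma> \<partial>lborel) = 0 - (- exp (- c * a))"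
  proof (rule nn_integral_FTC_atLeast)
    show "((\<lambda>\<sigma>. - exp (- c * \<sigma>)) \<longlongrightarrow> 0) at_top"
      using assms by real_asymp
  qed (use assms in \<open>auto intro!: derivative_eq_intros\<close>)
  then show ?thesis by simp
qed

lemma nn_integral_exp_density:
  "0 < c \<Longrightarrow> (\<integral>\<^sup>+\<sigma>. ennreal (c * exp (- c * \<sigma>)) * indicator {0..} \<sigma> \<partial>lborel) = 1"
  using nn_integral_exp_tail[of c 0] by simp

lemma nn_integral_exp_density_times_exp:
  assumes "0 < \<theta>" "0 \<le> c"
  shows "(\<integral>\<^sup>+\<sigma>. ennreal (\<theta> * exp (- \<theta> * \<sigma>)) * indicator {0..} \<sigma> * ennreal (exp (- c * \<sigma>)) \<partial>lborel)
    = ennreal (\<theta> / (\<theta> + c))"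
proof -
  have "\<theta> * exp (- \<theta> * \<sigma>) * exp (- c * \<sigma>) = \<theta> / (\<theta> + c) * ((\<theta> + c) * exp (- (\<theta> + c) * \<sigma>))" for \<sigma>
  proof -
    have "exp (- \<theta> * \<sigma>) * exp (- c * \<sigma>) = exp (- (\<theta> + c) * \<sigma>)"
      by (simp add: exp_add[symmetric] algebra_simps)
    moreover have "\<theta> / (\<theta> + c) * (\<theta> + c) = \<theta>"
      using assms by simp
    ultimately show ?thesis by (metis mult.assoc)
  qed
  then have "ennreal (\<theta> * exp (- \<theta> * \<sigma>)) * ennreal (exp (- c * \<sigma>))
      = ennreal (\<theta> / (\<theta> + c)) * ennreal ((\<theta> + c) * exp (- (\<theta> + c) * \<sigma>))" for \<sigma>
    using assms by (simp flip: ennreal_mult')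
  then have "(\<integral>\<^sup>+\<sigma>. ennreal (\<theta> * exp (- \<theta> * \<sigma>)) * indicator {0..} \<sigma>
      * ennreal (exp (- c * \<sigma>)) \<partial>lborel)
      = (\<integral>\<^sup>+\<sigma>. ennreal (\<theta> / (\<theta> + c)) * (ennreal ((\<theta> + c) * exp (- (\<theta> + c) * \<sigma>)) * indicator {0..} \<sigma>)
          \<partial>lborel)"
    by (intro nn_integral_cong) (simp add: mult_ac)
  also have "\<dots> = ennreal (\<theta> / (\<theta> + c))"
    using assms nn_integral_exp_density[of "\<theta> + c"] by (simp add: nn_integral_cmult)
  finally show ?thesis .
qed

definition decay :: "real \<Rightarrow> ennreal \<Rightarrow> real" where
  "decay \<theta> h = (if h = \<top> then 0 else exp (- \<theta> * enn2real h))"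

lemma decay_measurable[measurable]: "decay \<theta> \<in> borel_measurable borel"
  unfolding decay_def by measurable

lemma decay_nonneg: "0 \<le> decay \<theta> h"
  by (simp add: decay_def)

lemma decay_le_1: "0 \<le> \<theta> \<Longrightarrow> decay \<theta> h \<le> 1"
  by (simp add: decay_def enn2real_nonneg)

lemma decay_0 [simp]: "decay \<theta> 0 = 1"
  by (simp add: decay_def)

lemma decay_add: "decay \<theta> (a + b) = decay \<theta> a * decay \<theta> b"
  by (cases a; cases b) (simp_all add: decay_def ennreal_plus[symmetric] exp_add[symmetric]
      algebra_simps del: ennreal_plus)

lemma decay_sum: "decay \<theta> (\<Sum>i\<in>A. h i) = (\<Prod>i\<in>A. decay \<theta> (h i))"
  by (induction A rule: infinite_finite_induct) (simp_all add: decay_add)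

lemma decay_eq_nn_integral:
  assumes "0 < \<theta>"
  shows "ennreal (decay \<theta> h) = (\<integral>\<^sup>+\<sigma>. ennreal (\<theta> * exp (- \<theta> * \<sigma>)) * indicator {0..} \<sigma>
      * indicator {h..} (ennreal \<sigma>) \<partial>lborel)"
proof (cases h)
  case (real a)
  then have "(\<integral>\<^sup>+\<sigma>. ennreal (\<theta> * exp (- \<theta> * \<sigma>)) * indicator {0..} \<sigma>
      * indicator {h..} (ennreal \<sigma>) \<partial>lborel)
      = (\<integral>\<^sup>+\<sigma>. ennreal (\<theta> * exp (- \<theta> * \<sigma>)) * indicator {a..} \<sigma> \<partial>lborel)"
    by (intro nn_integral_cong) (auto split: split_indicator simp: ennreal_le_iff2)
  with real show ?thesis using nn_integral_exp_tail[OF assms, of a] by (simp add: decay_def)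
qed (simp add: decay_def indicator_def top_unique)

lemma one_minus_decay_eq_nn_integral:
  assumes "0 < \<theta>"
  shows "ennreal (1 - decay \<theta> h) = (\<integral>\<^sup>+\<sigma>. ennreal (\<theta> * exp (- \<theta> * \<sigma>)) * indicator {0..} \<sigma>
      * indicator {..<h} (ennreal \<sigma>) \<partial>lborel)"
proof -
  let ?e = "\<lambda>\<sigma>. ennreal (\<theta> * exp (- \<theta> * \<sigma>)) * indicator {0..} \<sigma>"
  have "(\<integral>\<^sup>+\<sigma>. ?e \<sigma> * indicator {..<h} (ennreal \<sigma>) + ?e \<sigma> * indicator {h..} (ennreal \<sigma>) \<partial>lborel)
      = (\<integral>\<^sup>+\<sigma>. ?e \<sigma> \<partial>lborel)"
    by (intro nn_integral_cong) (auto split: split_indicator)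
  then have "1 = (\<integral>\<^sup>+\<sigma>. ?e \<sigma> * indicator {..<h} (ennreal \<sigma>)
      + ?e \<sigma> * indicator {h..} (ennreal \<sigma>) \<partial>lborel)"
    using nn_integral_exp_density[OF assms] by simp
  also have "\<dots> = (\<integral>\<^sup>+\<sigma>. ?e \<sigma> * indicator {..<h} (ennreal \<sigma>) \<partial>lborel) + ennreal (decay \<theta> h)"
    by (subst nn_integral_add) (auto simp: decay_eq_nn_integral[OF assms])
  finally have "ennreal 1 - ennreal (decay \<theta> h)
      = (\<integral>\<^sup>+\<sigma>. ?e \<sigma> * indicator {..<h} (ennreal \<sigma>) \<partial>lborel) + ennreal (decay \<theta> h)
          - ennreal (decay \<theta> h)"
    by simp
  then show ?thesis
    using ennreal_minus[OF decay_nonneg, of 1 \<theta> h] by (simp add: ennreal_add_diff_cancel_right)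
qed

lemma exp_times_le_laplace_of_mono:
  fixes X :: "real \<Rightarrow> ennreal"
  assumes "mono X" "0 < \<theta>" "0 \<le> T"
  shows "ennreal (exp (- \<theta> * T)) * X T \<le> (\<integral>\<^sup>+\<sigma>. ennreal (\<theta> * exp (- \<theta> * \<sigma>)) * indicator {0..} \<sigma>
      * X \<sigma> \<partial>lborel)"
proof -
  have "(\<lambda>\<sigma>. ennreal (\<theta> * exp (- \<theta> * \<sigma>)) * indicator {T..} \<sigma>) \<in> borel_measurable lborel"
    by measurable
  then have "ennreal (exp (- \<theta> * T)) * X T = (\<integral>\<^sup>+\<sigma>. ennreal (\<theta> * exp (- \<theta> * \<sigma>)) * indicator {T..} \<sigma>
      * X T \<partial>lborel)"
    by (simp only: nn_integral_multc nn_integral_exp_tail[OF assms(2)])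
  also have "\<dots> \<le> (\<integral>\<^sup>+\<sigma>. ennreal (\<theta> * exp (- \<theta> * \<sigma>)) * indicator {0..} \<sigma> * X \<sigma> \<partial>lborel)"
    using assms by (intro nn_integral_mono) (auto split: split_indicator
        intro: mult_left_mono monoD)
  finally show ?thesis .
qed

lemma power2_max_1:
  fixes t :: real
  assumes "0 \<le> t"
  shows "(max 1 t)\<^sup>2 = max 1 (t\<^sup>2)"
proof (cases "t \<le> 1")
  case True
  then have "t\<^sup>2 \<le> 1"
    using assms by (intro power_le_one)
  with True show ?thesis by simp
next
  case False
  then have "1 \<le> t\<^sup>2"
    by (intro one_le_power) simp
  with False show ?thesis by simp
qed

lemma quadratic_bound_of_laplace_bound:
  fixes X :: "real \<Rightarrow> ennreal"
  assumes "mono X"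
    and laplace: "\<And>\<theta>. 0 < \<theta> \<Longrightarrow> \<theta> \<le> 1 \<Longrightarrow>
      ennreal (\<theta>\<^sup>2) * (\<integral>\<^sup>+\<sigma>. ennreal (\<theta> * exp (- \<theta> * \<sigma>)) * indicator {0..} \<sigma> * X \<sigma> \<partial>lborel)
          \<le> ennreal B"
    and "0 \<le> t"
  shows "X t \<le> ennreal (exp 1 * B * max 1 (t\<^sup>2))"
proof -
  define T where "T = max 1 t"
  have T: "1 \<le> T" "t \<le> T" unfolding T_def by auto
  have T_sq: "T\<^sup>2 = max 1 (t\<^sup>2)"
    unfolding T_def using \<open>0 \<le> t\<close> by (rule power2_max_1)
  have "exp (- 1) / T\<^sup>2 = (1 / T)\<^sup>2 * exp (- (1 / T) * T)"
    using T by (simp add: power_divide)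
  then have "ennreal (exp (- 1) / T\<^sup>2) * X t = ennreal ((1 / T)\<^sup>2)
      * (ennreal (exp (- (1 / T) * T)) * X t)"
    by (simp only: ennreal_mult'[OF zero_le_power2] mult.assoc)
  also have "\<dots> \<le> ennreal ((1 / T)\<^sup>2) * (ennreal (exp (- (1 / T) * T)) * X T)"
    using T by (intro mult_left_mono monoD[OF \<open>mono X\<close>]) auto
  also have "\<dots> \<le> ennreal ((1 / T)\<^sup>2) * (\<integral>\<^sup>+\<sigma>. ennreal (1 / T * exp (- (1 / T) * \<sigma>))
      * indicator {0..} \<sigma> * X \<sigma> \<partial>lborel)"
    using T by (intro mult_left_mono exp_times_le_laplace_of_mono \<open>mono X\<close>) auto
  also have "\<dots> \<le> ennreal B"
    using T by (intro laplace) auto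
  finally have "ennreal (exp 1 * T\<^sup>2) * (ennreal (exp (- 1) / T\<^sup>2) * X t)
      \<le> ennreal (exp 1 * T\<^sup>2) * ennreal B"
    by (rule mult_left_mono) simp
  moreover have "ennreal (exp 1 * T\<^sup>2) * (ennreal (exp (- 1) / T\<^sup>2) * X t) = X t"
  proof -
    have "exp 1 * T\<^sup>2 * (exp (- 1) / T\<^sup>2) = 1"
      using T by (simp add: exp_minus field_simps)
    then have "ennreal (exp 1 * T\<^sup>2) * ennreal (exp (- 1) / T\<^sup>2) = 1"
      using ennreal_mult'[of "exp 1 * T\<^sup>2" "exp (- 1) / T\<^sup>2"] by simp
    then show ?thesis by (simp only: mult.assoc[symmetric] mult_1)
  qed
  moreover have "ennreal (exp 1 * T\<^sup>2) * ennreal B = ennreal (exp 1 * B * max 1 (t\<^sup>2))"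
    using ennreal_mult'[of "exp 1 * T\<^sup>2" B] by (simp add: T_sq mult_ac)
  ultimately show ?thesis by simp
qed

section \<open>Nonnegative kernels and path sums\<close>

definition kernel_apply :: "('a \<Rightarrow> 'a \<Rightarrow> ennreal) \<Rightarrow> ('a \<Rightarrow> ennreal) \<Rightarrow> 'a \<Rightarrow> ennreal" where
  "kernel_apply K f x = count_sum (\<lambda>x'. K x x' * f x')"

abbreviation kernel_power :: "('a \<Rightarrow> 'a \<Rightarrow> ennreal) \<Rightarrow> nat \<Rightarrow> ('a \<Rightarrow> ennreal) \<Rightarrow> 'a \<Rightarrow> ennreal" where
  "kernel_power K n \<equiv> kernel_apply K ^^ n"

lemma kernel_apply_mono: "(\<And>x. f x \<le> g x) \<Longrightarrow> kernel_apply K f x \<le> kernel_apply K g x"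
  unfolding kernel_apply_def by (intro nn_integral_mono mult_left_mono) auto

lemma kernel_apply_add: "kernel_apply K (\<lambda>x. f x + g x) x = kernel_apply K f x + kernel_apply K g x"
  unfolding kernel_apply_def by (simp add: distrib_left nn_integral_add)

lemma kernel_apply_cmult: "kernel_apply K (\<lambda>x. c * f x) x = c * kernel_apply K f x"
  unfolding kernel_apply_def by (simp add: nn_integral_cmult[symmetric] mult.left_commute)

lemma kernel_apply_suminf: "kernel_apply K (\<lambda>x. \<Sum>i. f i x) x = (\<Sum>i. kernel_apply K (f i) x)"
  unfolding kernel_apply_def by (simp add: nn_integral_suminf[symmetric])

lemma kernel_apply_sum: "kernel_apply K (\<lambda>y. \<Sum>j\<in>A. f j y) x = (\<Sum>j\<in>A. kernel_apply K (f j) x)"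
  unfolding kernel_apply_def by (simp add: sum_distrib_left nn_integral_sum)

lemma kernel_power_Suc_right: "kernel_power K (Suc n) f = kernel_power K n (kernel_apply K f)"
  by (simp only: funpow_Suc_right comp_apply)

lemma kernel_power_add: "kernel_power K (m + n) f = kernel_power K m (kernel_power K n f)"
  by (simp add: funpow_add)

lemma kernel_power_mono: "(\<And>x. f x \<le> g x) \<Longrightarrow> kernel_power K n f x \<le> kernel_power K n g x"
  by (induction n arbitrary: x) (auto intro!: kernel_apply_mono)

lemma kernel_power_add_fun:
  "kernel_power K n (\<lambda>x. f x + g x) x = kernel_power K n f x + kernel_power K n g x"
proof (induction n arbitrary: x)
  case (Suc n)
  then have "kernel_power K n (\<lambda>x. f x + g x) = (\<lambda>x. kernel_power K n f x + kernel_power K n g x)"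
    by auto
  then show ?case by (simp add: kernel_apply_add)
qed simp

lemma kernel_power_cmult: "kernel_power K n (\<lambda>x. c * f x) x = c * kernel_power K n f x"
proof (induction n arbitrary: x)
  case (Suc n)
  then have "kernel_power K n (\<lambda>x. c * f x) = (\<lambda>x. c * kernel_power K n f x)"
    by auto
  then show ?case by (simp add: kernel_apply_cmult)
qed simp

lemma kernel_power_suminf: "kernel_power K n (\<lambda>x. \<Sum>i. f i x) x = (\<Sum>i. kernel_power K n (f i) x)"
proof (induction n arbitrary: x)
  case (Suc n)
  then have "kernel_power K n (\<lambda>x. \<Sum>i. f i x) = (\<lambda>x. \<Sum>i. kernel_power K n (f i) x)"
    by auto
  then show ?case by (simp add: kernel_apply_suminf)
qed simp

lemma suminf_kernel_power_le:
  assumes excessive: "\<And>x. u x + kernel_apply K h x \<le> h x"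
  shows "(\<Sum>j. kernel_power K j u x) \<le> h x"
proof (rule suminf_le_const)
  fix N
  have "(\<Sum>j<N. kernel_power K j u x) + kernel_power K N h x \<le> h x" for x
  proof (induction N arbitrary: x)
    case (Suc N)
    have "(\<Sum>j<Suc N. kernel_power K j u x) + kernel_power K (Suc N) h x
        = u x + kernel_apply K (\<lambda>y. (\<Sum>j<N. kernel_power K j u y) + kernel_power K N h y) x"
      by (simp add: sum.lessThan_Suc_shift kernel_apply_sum kernel_apply_add add.assoc
          del: sum.lessThan_Suc)
    also have "\<dots> \<le> u x + kernel_apply K h x"
      by (intro add_left_mono kernel_apply_mono Suc.IH)
    also have "\<dots> \<le> h x"
      by (rule excessive)
    finally show ?case .
  qed simp
  then show "(\<Sum>j<N. kernel_power K j u x) \<le> h x"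
    by (rule order_trans[rotated]) simp
qed simp

fun path_weight :: "('a \<Rightarrow> 'a \<Rightarrow> ennreal) \<Rightarrow> ('a \<Rightarrow> ennreal) \<Rightarrow> 'a \<Rightarrow> 'a list \<Rightarrow> ennreal" where
  "path_weight K h z [] = h z"
| "path_weight K h z (x # xs) = K z x * path_weight K h x xs"

lemma count_sum_lists_Suc:
  fixes F :: "'a::countable list \<Rightarrow> ennreal"
  shows "count_sum (\<lambda>ys. if length ys = Suc n then F ys else 0)
    = count_sum (\<lambda>x. count_sum (\<lambda>xs. if length xs = n then F (x # xs) else 0))"
proof -
  have bij: "bij_betw (\<lambda>(x, xs). x # xs) (UNIV \<times> {xs. length xs = n}) {ys. length ys = Suc n}"
    by (rule bij_betwI[where g = "\<lambda>ys. (hd ys, tl ys)"]) (auto simp: length_Suc_conv)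
  have "count_sum (\<lambda>ys. if length ys = Suc n then F ys else 0)
      = (\<integral>\<^sup>+ys. F ys \<partial>count_space {ys. length ys = Suc n})"
    by (auto simp: nn_integral_count_space_indicator intro!: nn_integral_cong)
  also have "\<dots> = (\<integral>\<^sup>+p. F (fst p # snd p) \<partial>count_space (UNIV \<times> {xs. length xs = n}))"
    using nn_integral_bij_count_space[OF bij, of F] by (simp add: case_prod_beta)
  also have "\<dots> = (\<integral>\<^sup>+p. F (fst p # snd p) \<partial>(count_space UNIV \<Otimes>\<^sub>M count_space {xs. length xs = n}))"
    by (simp add: pair_measure_countable)
  also have "\<dots> = count_sum (\<lambda>x. \<integral>\<^sup>+xs. F (x # xs) \<partial>count_space {xs. length xs = n})"
    by (subst sigma_finite_measure.nn_integral_fst[symmetric])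
        (auto simp: sigma_finite_measure_count_space_countable pair_measure_countable)
  also have "\<dots> = count_sum (\<lambda>x. count_sum (\<lambda>xs. if length xs = n then F (x # xs) else 0))"
    by (auto simp: nn_integral_count_space_indicator intro!: nn_integral_cong)
  finally show ?thesis .
qed

lemma count_sum_path_weight:
  fixes K :: "'a::countable \<Rightarrow> 'a \<Rightarrow> ennreal"
  shows "count_sum (\<lambda>xs. if length xs = n then path_weight K h z xs else 0) = kernel_power K n h z"
proof (induction n arbitrary: z)
  case 0
  have "(\<lambda>xs. if length xs = 0 then path_weight K h z xs else 0) = (\<lambda>xs. h z * indicator {[]} xs)"
    by (auto simp: fun_eq_iff)
  then show ?case by (simp add: nn_integral_cmult)
next
  case (Suc n)
  have "count_sum (\<lambda>xs. if length xs = n then path_weight K h z (x # xs) else 0)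
      = K z x * kernel_power K n h x" for x
  proof -
    have "(\<lambda>xs. if length xs = n then path_weight K h z (x # xs) else 0)
        = (\<lambda>xs. K z x * (if length xs = n then path_weight K h x xs else 0))"
      by auto
    then show ?thesis by (simp add: nn_integral_cmult Suc.IH)
  qed
  then show ?case
    by (simp add: count_sum_lists_Suc kernel_apply_def[of K "kernel_power K n h" z])
qed

section \<open>Resolvent of a stationary rate kernel\<close>

definition resolvent :: "('a \<Rightarrow> 'a \<Rightarrow> ennreal) \<Rightarrow> ('a \<Rightarrow> ennreal) \<Rightarrow> real \<Rightarrow> 'a \<Rightarrow> 'a \<Rightarrow> ennreal" where
  "resolvent Q q \<theta> x x' = Q x x' / (q x + ennreal \<theta>)"

locale stationary_rates =
  fixes Q :: "'a::countable \<Rightarrow> 'a \<Rightarrow> ennreal" and q \<pi> :: "'a \<Rightarrow> ennreal"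
  assumes row_sum: "\<And>x. count_sum (Q x) = q x"
    and rate_finite: "\<And>x. q x < \<top>"
    and stationary: "\<And>x'. count_sum (\<lambda>x. \<pi> x * Q x x') = \<pi> x' * q x'"
begin

context
  fixes \<theta> :: real
  assumes \<theta>_pos: "0 < \<theta>"
begin

abbreviation R :: "'a \<Rightarrow> 'a \<Rightarrow> ennreal" where
  "R \<equiv> resolvent Q q \<theta>"

lemma exit_rate_nonzero: "q x + ennreal \<theta> \<noteq> 0"
  using \<theta>_pos by simp

lemma exit_rate_finite: "q x + ennreal \<theta> \<noteq> \<top>"
  using rate_finite[of x] by simp

lemma times_divide_exit_rate: "(q x + ennreal \<theta>) * (a / (q x + ennreal \<theta>)) = a"
  using exit_rate_nonzero exit_rate_finite
  by (simp add: ennreal_times_divide mult.commute[of _ a] mult_divide_eq_ennreal)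

lemma kernel_apply_resolvent_1: "kernel_apply R (\<lambda>_. 1) x = q x / (q x + ennreal \<theta>)"
  by (simp add: kernel_apply_def resolvent_def nn_integral_divide row_sum)

lemma kill_plus_jump: "ennreal \<theta> / (q x + ennreal \<theta>) + q x / (q x + ennreal \<theta>) = 1"
proof -
  have "ennreal \<theta> / (q x + ennreal \<theta>) + q x / (q x + ennreal \<theta>)
      = (q x + ennreal \<theta>) / (q x + ennreal \<theta>)"
    by (simp add: add_divide_distrib_ennreal add.commute)
  also have "\<dots> = 1"
    using exit_rate_nonzero exit_rate_finite by (simp add: top.not_eq_extremum)
  finally show ?thesis .
qed

lemma stationary_resolvent:
  "count_sum (\<lambda>x. \<pi> x * (q x + ennreal \<theta>) * kernel_apply R f x) = count_sum (\<lambda>x. \<pi> x * q x * f x)"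
proof -
  have "count_sum (\<lambda>x. \<pi> x * (q x + ennreal \<theta>) * kernel_apply R f x)
      = count_sum (\<lambda>x. count_sum (\<lambda>x'. \<pi> x * Q x x' * f x'))"
  proof -
    have "(q x + ennreal \<theta>) * (Q x x' / (q x + ennreal \<theta>) * f x') = Q x x' * f x'" for x x'
      by (simp add: mult.assoc[symmetric] times_divide_exit_rate)
    then show ?thesis
      by (simp add: kernel_apply_def resolvent_def nn_integral_cmult[symmetric] mult.assoc)
  qed
  also have "\<dots> = count_sum (\<lambda>x'. count_sum (\<lambda>x. \<pi> x * Q x x') * f x')"
    by (subst count_sum_swap) (simp add: nn_integral_multc)
  finally show ?thesis by (simp add: stationary)
qed

lemma stationary_resolvent_suminf:
  "ennreal \<theta> * (\<Sum>m. count_sum (\<lambda>x. \<pi> x * kernel_power R m f x))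
      \<le> count_sum (\<lambda>x. \<pi> x * (q x + ennreal \<theta>) * f x)"
proof -
  have "ennreal \<theta> * (\<Sum>m<N. count_sum (\<lambda>x. \<pi> x * kernel_power R m f x))
      \<le> count_sum (\<lambda>x. \<pi> x * (q x + ennreal \<theta>) * f x)" for N
  proof (induction N arbitrary: f)
    case (Suc N)
    have "ennreal \<theta> * (\<Sum>m<Suc N. count_sum (\<lambda>x. \<pi> x * kernel_power R m f x))
        = ennreal \<theta> * count_sum (\<lambda>x. \<pi> x * f x)
            + ennreal \<theta> * (\<Sum>m<N. count_sum (\<lambda>x. \<pi> x * kernel_power R m (kernel_apply R f) x))"
      by (simp add: sum.lessThan_Suc_shift kernel_power_Suc_right distrib_left
          del: sum.lessThan_Suc funpow.simps)
    also have "\<dots> \<le> ennreal \<theta> * count_sum (\<lambda>x. \<pi> x * f x)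
        + count_sum (\<lambda>x. \<pi> x * (q x + ennreal \<theta>) * kernel_apply R f x)"
      by (intro add_left_mono Suc.IH)
    also have "\<dots> = ennreal \<theta> * count_sum (\<lambda>x. \<pi> x * f x) + count_sum (\<lambda>x. \<pi> x * q x * f x)"
      by (simp only: stationary_resolvent)
    also have "\<dots> = count_sum (\<lambda>x. \<pi> x * (q x + ennreal \<theta>) * f x)"
      by (simp add: nn_integral_cmult[symmetric] nn_integral_add[symmetric] distrib_left
          distrib_right mult_ac add.commute)
    finally show ?case .
  qed simp
  then show ?thesis
    unfolding ennreal_suminf_cmult[symmetric] by (intro suminf_le_const)
        (simp_all add: summableI sum_distrib_left)
qed

lemma suminf_resolvent_kill_le_1: "(\<Sum>j. kernel_power R j (\<lambda>y. ennreal \<theta> / (q y + ennreal \<theta>)) x) \<le> 1"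
  by (rule suminf_kernel_power_le) (simp add: kernel_apply_resolvent_1 kill_plus_jump)

abbreviation jump_first :: "'a \<Rightarrow> ennreal" where
  "jump_first x \<equiv> q x / (q x + ennreal \<theta>)"

abbreviation jumps_before_kill :: "'a \<Rightarrow> ennreal" where
  "jumps_before_kill x \<equiv> \<Sum>j. kernel_power R j jump_first x"

lemma resolvent_first_moment:
  "ennreal \<theta> * (\<Sum>n. count_sum (\<lambda>x. \<pi> x * kernel_power R n jump_first x))
      \<le> count_sum (\<lambda>x. \<pi> x * q x)"
  using stationary_resolvent_suminf[of jump_first] by (simp add: mult.assoc times_divide_exit_rate)

lemma resolvent_weighted_moment:
  "ennreal \<theta> * (\<Sum>n. of_nat n * count_sum (\<lambda>x. \<pi> x * kernel_power R n jump_first x))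
    \<le> count_sum (\<lambda>x. \<pi> x * q x * jumps_before_kill x)"
proof -
  have "(\<Sum>j. count_sum (\<lambda>x. \<pi> x * kernel_power R (j + Suc m) jump_first x))
      = count_sum (\<lambda>x. \<pi> x * kernel_power R m (kernel_apply R jumps_before_kill) x)" for m
  proof -
    have "kernel_power R (j + Suc m) jump_first
        = kernel_power R m (kernel_power R (Suc j) jump_first)" for j
      by (simp only: kernel_power_add[symmetric] add.commute add_Suc_right)
    then have "(\<Sum>j. count_sum (\<lambda>x. \<pi> x * kernel_power R (j + Suc m) jump_first x))
        = count_sum (\<lambda>x. \<pi> x * kernel_power R m (\<lambda>y. \<Sum>j. kernel_power R (Suc j) jump_first y) x)"
      by (simp add: nn_integral_suminf[symmetric] kernel_power_suminf ennreal_suminf_cmult)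
    also have "(\<lambda>y. \<Sum>j. kernel_power R (Suc j) jump_first y) = kernel_apply R jumps_before_kill"
      by (simp add: kernel_apply_suminf fun_eq_iff)
    finally show ?thesis .
  qed
  then have "ennreal \<theta> * (\<Sum>n. of_nat n * count_sum (\<lambda>x. \<pi> x * kernel_power R n jump_first x))
      = ennreal \<theta> *
          (\<Sum>m. count_sum (\<lambda>x. \<pi> x * kernel_power R m (kernel_apply R jumps_before_kill) x))"
    by (simp add: suminf_of_nat_times)
  also have "\<dots> \<le> count_sum (\<lambda>x. \<pi> x * (q x + ennreal \<theta>) * kernel_apply R jumps_before_kill x)"
    by (rule stationary_resolvent_suminf)
  also have "\<dots> = count_sum (\<lambda>x. \<pi> x * q x * jumps_before_kill x)"
    by (rule stationary_resolvent)
  finally show ?thesis .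
qed

lemma jumps_before_kill_le:
  "ennreal \<theta> * (2 * q x * jumps_before_kill x)
    \<le> q x ^ 2 * (\<Sum>j. kernel_power R j (\<lambda>y. ennreal \<theta> / (q y + ennreal \<theta>)) x)
      + ennreal \<theta> * (\<Sum>j. kernel_power R j (\<lambda>y. q y ^ 2 / (q y + ennreal \<theta>)) x)"
proof -
  have am_gm: "ennreal \<theta> * (2 * q x * jump_first y)
      \<le> q x ^ 2 * (ennreal \<theta> / (q y + ennreal \<theta>)) + ennreal \<theta> * (q y ^ 2 / (q y + ennreal \<theta>))" for y
  proof -
    have "ennreal \<theta> * (2 * q x * q y) \<le> ennreal \<theta> * (q x ^ 2 + q y ^ 2)"
      by (intro mult_left_mono sum_of_squares_ge_ennreal) simp
    then have "ennreal \<theta> * (2 * q x * q y) / (q y + ennreal \<theta>)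
        \<le> ennreal \<theta> * (q x ^ 2 + q y ^ 2) / (q y + ennreal \<theta>)"
      by (rule divide_right_mono_ennreal)
    then show ?thesis
      by (simp add: ennreal_times_divide add_divide_distrib_ennreal distrib_left mult_ac)
  qed
  have "ennreal \<theta> * (2 * q x * jumps_before_kill x)
      = (\<Sum>j. kernel_power R j (\<lambda>y. ennreal \<theta> * (2 * q x * jump_first y)) x)"
    by (simp add: kernel_power_cmult ennreal_suminf_cmult mult.assoc)
  also have "\<dots> \<le> (\<Sum>j. kernel_power R j (\<lambda>y. q x ^ 2 * (ennreal \<theta> / (q y + ennreal \<theta>))
      + ennreal \<theta> * (q y ^ 2 / (q y + ennreal \<theta>))) x)"
    by (intro suminf_le kernel_power_mono am_gm) auto
  also have "\<dots> = q x ^ 2 * (\<Sum>j. kernel_power R j (\<lambda>y. ennreal \<theta> / (q y + ennreal \<theta>)) x)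
      + ennreal \<theta> * (\<Sum>j. kernel_power R j (\<lambda>y. q y ^ 2 / (q y + ennreal \<theta>)) x)"
    by (simp add: kernel_power_add_fun kernel_power_cmult suminf_add[symmetric]
        ennreal_suminf_cmult)
  finally show ?thesis .
qed

lemma resolvent_jump_moment:
  "ennreal \<theta> * count_sum (\<lambda>x. \<pi> x * q x * jumps_before_kill x) \<le> count_sum (\<lambda>x. \<pi> x * q x ^ 2)"
proof -
  let ?kill = "\<lambda>y. ennreal \<theta> / (q y + ennreal \<theta>)"
  let ?g = "\<lambda>y. q y ^ 2 / (q y + ennreal \<theta>)"
  have "2 * (ennreal \<theta> * count_sum (\<lambda>x. \<pi> x * q x * jumps_before_kill x))
      = count_sum (\<lambda>x. \<pi> x * (ennreal \<theta> * (2 * q x * jumps_before_kill x)))"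
    by (simp add: nn_integral_cmult[symmetric] mult_ac)
  also have "\<dots> \<le> count_sum (\<lambda>x. \<pi> x * q x ^ 2 * (\<Sum>j. kernel_power R j ?kill x)
      + ennreal \<theta> * (\<Sum>j. \<pi> x * kernel_power R j ?g x))"
    by (intro nn_integral_mono order_trans[OF mult_left_mono[OF jumps_before_kill_le]])
       (simp_all add: distrib_left ennreal_suminf_cmult mult_ac)
  also have "\<dots> = count_sum (\<lambda>x. \<pi> x * q x ^ 2 * (\<Sum>j. kernel_power R j ?kill x))
      + ennreal \<theta> * (\<Sum>j. count_sum (\<lambda>x. \<pi> x * kernel_power R j ?g x))"
    by (simp add: nn_integral_add nn_integral_cmult nn_integral_suminf[symmetric])
  also have "\<dots> \<le> count_sum (\<lambda>x. \<pi> x * q x ^ 2)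
      + ennreal \<theta> * (\<Sum>j. count_sum (\<lambda>x. \<pi> x * kernel_power R j ?g x))"
    by (intro add_right_mono nn_integral_mono mult_left_le suminf_resolvent_kill_le_1) simp
  also have "\<dots> \<le> count_sum (\<lambda>x. \<pi> x * q x ^ 2) + count_sum (\<lambda>x. \<pi> x * (q x + ennreal \<theta>) * ?g x)"
    by (intro add_left_mono stationary_resolvent_suminf)
  also have "\<dots> = 2 * count_sum (\<lambda>x. \<pi> x * q x ^ 2)"
    by (simp add: mult.assoc times_divide_exit_rate mult_2)
  finally show ?thesis
    by (simp add: ennreal_mult_le_mult_iff)
qed

theorem resolvent_second_moment:
  "ennreal \<theta> ^ 2 * (\<Sum>n. (2 * of_nat n + 1) * count_sum (\<lambda>x. \<pi> x * kernel_power R n jump_first x))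
    \<le> ennreal \<theta> * count_sum (\<lambda>x. \<pi> x * q x) + 2 * count_sum (\<lambda>x. \<pi> x * q x ^ 2)"
proof -
  let ?a = "\<lambda>n. count_sum (\<lambda>x. \<pi> x * kernel_power R n jump_first x)"
  have "(\<Sum>n. (2 * of_nat n + 1) * ?a n) = 2 * (\<Sum>n. of_nat n * ?a n) + (\<Sum>n. ?a n)"
    by (simp add: distrib_right suminf_add[symmetric] ennreal_suminf_cmult mult.assoc)
  then have "ennreal \<theta> ^ 2 * (\<Sum>n. (2 * of_nat n + 1) * ?a n)
      = 2 * (ennreal \<theta> * (ennreal \<theta> * (\<Sum>n. of_nat n * ?a n)))
          + ennreal \<theta> * (ennreal \<theta> * (\<Sum>n. ?a n))"
    by (simp add: power2_eq_square distrib_left mult_ac)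
  also have "\<dots> \<le> 2 * (ennreal \<theta> * count_sum (\<lambda>x. \<pi> x * q x * jumps_before_kill x))
      + ennreal \<theta> * count_sum (\<lambda>x. \<pi> x * q x)"
    by (intro add_mono mult_left_mono resolvent_weighted_moment resolvent_first_moment) auto
  also have "\<dots> \<le> 2 * count_sum (\<lambda>x. \<pi> x * q x ^ 2) + ennreal \<theta> * count_sum (\<lambda>x. \<pi> x * q x)"
    by (intro add_right_mono mult_left_mono resolvent_jump_moment) auto
  finally show ?thesis
    by (simp add: add.commute)
qed

end

end

section \<open>Exponential holding times\<close>

(* On A, which has mass c, the holding times H 0, ..., H n are independent and exponential
   with rates r 0, ..., r n. *)
locale exponential_holding_times = finite_measure M for M :: "'w measure" +
  fixes A :: "'w set" and H :: "nat \<Rightarrow> 'w \<Rightarrow> ennreal" and r :: "nat \<Rightarrow> real" and n :: nat and c :: real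
  assumes A_sets: "A \<in> sets M"
    and H_measurable: "\<And>i. H i \<in> borel_measurable M"
    and r_nonneg: "\<And>i. 0 \<le> r i"
    and survival: "\<And>s. (\<And>i. 0 \<le> s i) \<Longrightarrow>
      measure M {\<omega>\<in>A. \<forall>i\<le>n. ennreal (s i) < H i \<omega>} = c * (\<Prod>i\<le>n. exp (- r i * s i))"
begin

declare A_sets[measurable] H_measurable[measurable]

definition tail_event :: "nat set \<Rightarrow> (nat \<Rightarrow> real) \<Rightarrow> 'w set" where
  "tail_event C s = {\<omega>\<in>A. \<forall>i\<in>{..n}-C. ennreal (s i) < H i \<omega>}"

definition holding_event :: "'w set" where
  "holding_event = {\<omega>\<in>A. \<forall>i\<le>n. 0 < H i \<omega>}"

lemma tail_event_sets[measurable]: "tail_event C s \<in> sets M"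
  unfolding tail_event_def by measurable

lemma holding_event_sets[measurable]: "holding_event \<in> sets M"
  unfolding holding_event_def by measurable

lemma measure_holding_event: "measure M holding_event = c"
  using survival[of "\<lambda>_. 0"] by (simp add: holding_event_def)

lemma tail_event_upd:
  assumes "j \<le> n" "j \<notin> C"
  shows "\<omega> \<in> tail_event C (s(j := \<sigma>)) \<longleftrightarrow> \<omega> \<in> tail_event (insert j C) s \<and> ennreal \<sigma> < H j \<omega>"
  using assms unfolding tail_event_def by auto

lemma tail_event_upd_measurable:
  "(\<lambda>p. indicator (tail_event C (s(j := snd p))) (fst p) :: ennreal) \<in> borel_measurable
      (M \<Otimes>\<^sub>M lborel)"
proof -
  have "(\<lambda>p. indicator (tail_event C (s(j := snd p))) (fst p) :: ennreal)
     = indicator {p\<in>space (M \<Otimes>\<^sub>M lborel). fst p \<in> A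
         \<and> (\<forall>i\<in>{..n}-C. ennreal (if i = j then snd p else s i) < H i (fst p))}"
    using sets.sets_into_space[OF A_sets]
    by (auto simp: tail_event_def space_pair_measure fun_eq_iff split: split_indicator)
  also have "\<dots> \<in> borel_measurable (M \<Otimes>\<^sub>M lborel)"
    by measurable
  finally show ?thesis .
qed

lemma prod_exp_upd:
  assumes "j \<le> n" "j \<notin> C"
  shows "(\<Prod>i\<in>{..n}-C. exp (- r i * (s(j := \<sigma>)) i))
      = exp (- r j * \<sigma>) * (\<Prod>i\<in>{..n}-insert j C. exp (- r i * s i))"
proof -
  have "(\<Prod>i\<in>{..n}-C. exp (- r i * (s(j := \<sigma>)) i))
      = exp (- r j * \<sigma>) * (\<Prod>i\<in>{..n}-C-{j}. exp (- r i * (s(j := \<sigma>)) i))"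
    using assms by (subst prod.remove[of _ j]) auto
  also have "{..n}-C-{j} = {..n}-insert j C"
    by auto
  also have "(\<Prod>i\<in>{..n}-insert j C. exp (- r i * (s(j := \<sigma>)) i))
      = (\<Prod>i\<in>{..n}-insert j C. exp (- r i * s i))"
    by (intro prod.cong) auto
  finally show ?thesis .
qed

lemma c_nonneg: "0 \<le> c"
  using measure_holding_event by (metis measure_nonneg)

lemma one_minus_decay_times_tail_event:
  assumes "0 < \<theta>" "j \<le> n" "j \<notin> C"
  shows "ennreal (1 - decay \<theta> (H j \<omega>)) * (a * indicator (tail_event (insert j C) s) \<omega>)
    = (\<integral>\<^sup>+\<sigma>. ennreal (\<theta> * exp (- \<theta> * \<sigma>)) * indicator {0..} \<sigma>
        * (a * indicator (tail_event C (s(j := \<sigma>))) \<omega>) \<partial>lborel)"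
proof -
  have "ennreal (\<theta> * exp (- \<theta> * \<sigma>)) * indicator {0..} \<sigma> * indicator {..<H j \<omega>} (ennreal \<sigma>)
      * (a * indicator (tail_event (insert j C) s) \<omega>)
      = ennreal (\<theta> * exp (- \<theta> * \<sigma>)) * indicator {0..} \<sigma>
          * (a * indicator (tail_event C (s(j := \<sigma>))) \<omega>)" for \<sigma>
    using tail_event_upd[OF assms(2,3)] by (auto split: split_indicator)
  then show ?thesis
    unfolding one_minus_decay_eq_nn_integral[OF assms(1)] by (simp flip: nn_integral_multc)
qed

lemma nn_integral_tail_event_insert:
  assumes \<theta>: "0 < \<theta>" and j: "j \<le> n" "j \<notin> C" and "finite C"
  shows "(\<integral>\<^sup>+\<omega>. (\<Prod>i\<in>insert j C. ennreal (1 - decay \<theta> (H i \<omega>)))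
      * indicator (tail_event (insert j C) s) \<omega> \<partial>M)
    = (\<integral>\<^sup>+\<sigma>. ennreal (\<theta> * exp (- \<theta> * \<sigma>)) * indicator {0..} \<sigma> *
        (\<integral>\<^sup>+\<omega>. (\<Prod>i\<in>C. ennreal (1 - decay \<theta> (H i \<omega>))) * indicator (tail_event C (s(j := \<sigma>))) \<omega> \<partial>M)
            \<partial>lborel)"
proof -
  let ?F = "\<lambda>\<omega> \<sigma>. ennreal (\<theta> * exp (- \<theta> * \<sigma>)) * indicator {0..} \<sigma> *
    ((\<Prod>i\<in>C. ennreal (1 - decay \<theta> (H i \<omega>))) * indicator (tail_event C (s(j := \<sigma>))) \<omega>)"
  have "(\<integral>\<^sup>+\<omega>. (\<Prod>i\<in>insert j C. ennreal (1 - decay \<theta> (H i \<omega>)))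
      * indicator (tail_event (insert j C) s) \<omega> \<partial>M)
      = (\<integral>\<^sup>+\<omega>. \<integral>\<^sup>+\<sigma>. ?F \<omega> \<sigma> \<partial>lborel \<partial>M)"
    by (intro nn_integral_cong)
       (simp only: prod.insert[OF \<open>finite C\<close> j(2)] mult.assoc
           one_minus_decay_times_tail_event[OF \<theta> j])
  also have "\<dots> = (\<integral>\<^sup>+\<sigma>. \<integral>\<^sup>+\<omega>. ?F \<omega> \<sigma> \<partial>M \<partial>lborel)"
  proof (rule pair_sigma_finite.Fubini'[symmetric])
    show "pair_sigma_finite M lborel"
      by (intro pair_sigma_finite.intro sigma_finite_measure_axioms
          lborel.sigma_finite_measure_axioms)
    show "case_prod ?F \<in> borel_measurable (M \<Otimes>\<^sub>M lborel)"
      using tail_event_upd_measurable[of C s j] unfolding case_prod_beta' by measurable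
  qed
  also have "\<dots> = (\<integral>\<^sup>+\<sigma>. ennreal (\<theta> * exp (- \<theta> * \<sigma>)) * indicator {0..} \<sigma> *
      (\<integral>\<^sup>+\<omega>. (\<Prod>i\<in>C. ennreal (1 - decay \<theta> (H i \<omega>))) * indicator (tail_event C (s(j := \<sigma>))) \<omega> \<partial>M)
          \<partial>lborel)"
    by (intro nn_integral_cong nn_integral_cmult) measurable
  finally show ?thesis .
qed

lemma nn_integral_tail_event:
  assumes \<theta>: "0 < \<theta>"
  shows "C \<subseteq> {..n} \<Longrightarrow> (\<And>i. 0 \<le> s i) \<Longrightarrow>
    (\<integral>\<^sup>+\<omega>. (\<Prod>i\<in>C. ennreal (1 - decay \<theta> (H i \<omega>))) * indicator (tail_event C s) \<omega> \<partial>M)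
    = ennreal (c * (\<Prod>i\<in>C. \<theta> / (\<theta> + r i)) * (\<Prod>i\<in>{..n}-C. exp (- r i * s i)))"
proof (induction C arbitrary: s rule: infinite_finite_induct)
  case (infinite C)
  then show ?case
    using finite_subset by blast
next
  case empty
  then show ?case
    using survival[of s] by (simp add: tail_event_def emeasure_eq_measure Ball_def)
next
  case (insert j C)
  have j: "j \<le> n" "j \<notin> C"
    using insert by auto
  define K where "K = c * (\<Prod>i\<in>C. \<theta> / (\<theta> + r i)) * (\<Prod>i\<in>{..n}-insert j C. exp (- r i * s i))"
  have K_nonneg: "0 \<le> K"
    unfolding K_def using c_nonneg \<theta> r_nonneg
    by (intro mult_nonneg_nonneg prod_nonneg divide_nonneg_pos add_pos_nonneg) auto
  have IH: "(\<integral>\<^sup>+\<omega>. (\<Prod>i\<in>C. ennreal (1 - decay \<theta> (H i \<omega>))) * indicator (tail_event C (s(j := \<sigma>))) \<omega> \<partial>M)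
      = ennreal (K * exp (- r j * \<sigma>))" if "0 \<le> \<sigma>" for \<sigma>
  proof -
    have "C \<subseteq> {..n}" "\<And>i. 0 \<le> (s(j := \<sigma>)) i"
      using insert.prems that by auto
    then have "(\<integral>\<^sup>+\<omega>. (\<Prod>i\<in>C. ennreal (1 - decay \<theta> (H i \<omega>)))
        * indicator (tail_event C (s(j := \<sigma>))) \<omega> \<partial>M)
        = ennreal (c * (\<Prod>i\<in>C. \<theta> / (\<theta> + r i)) * (\<Prod>i\<in>{..n}-C. exp (- r i * (s(j := \<sigma>)) i)))"
      by (rule insert.IH)
    then show ?thesis
      by (simp only: prod_exp_upd[OF j] K_def mult_ac)
  qed
  have "(\<integral>\<^sup>+\<omega>. (\<Prod>i\<in>insert j C. ennreal (1 - decay \<theta> (H i \<omega>)))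
      * indicator (tail_event (insert j C) s) \<omega> \<partial>M)
      = (\<integral>\<^sup>+\<sigma>. ennreal K * (ennreal (\<theta> * exp (- \<theta> * \<sigma>)) * indicator {0..} \<sigma>
          * ennreal (exp (- r j * \<sigma>))) \<partial>lborel)"
    unfolding nn_integral_tail_event_insert[OF \<theta> j insert.hyps(1)]
    using K_nonneg by (intro nn_integral_cong)
        (simp add: IH ennreal_mult' mult_ac split: split_indicator)
  also have "\<dots> = ennreal K * ennreal (\<theta> / (\<theta> + r j))"
    using nn_integral_exp_density_times_exp[OF \<theta> r_nonneg[of j]] by (simp add: nn_integral_cmult)
  also have "\<dots> = ennreal (K * (\<theta> / (\<theta> + r j)))"
    by (rule ennreal_mult'[OF K_nonneg, symmetric])
  also have "K * (\<theta> / (\<theta> + r j)) = c * (\<Prod>i\<in>insert j C. \<theta> / (\<theta> + r i))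
      * (\<Prod>i\<in>{..n}-insert j C. exp (- r i * s i))"
    using insert.hyps by (simp add: K_def mult_ac)
  finally show ?case .
qed

lemma nn_integral_holding_event:
  assumes \<theta>: "0 < \<theta>" and S: "S \<subseteq> {..n}"
  shows "(\<integral>\<^sup>+\<omega>. (\<Prod>i\<in>S. ennreal (1 - decay \<theta> (H i \<omega>))) * indicator holding_event \<omega> \<partial>M)
    = ennreal (c * (\<Prod>i\<in>S. \<theta> / (\<theta> + r i)))"
proof -
  have "(\<Prod>i\<in>S. ennreal (1 - decay \<theta> (H i \<omega>))) * indicator holding_event \<omega>
      = (\<Prod>i\<in>S. ennreal (1 - decay \<theta> (H i \<omega>))) * indicator (tail_event S (\<lambda>_. 0)) \<omega>" for \<omega>
  proof (cases "\<exists>i\<in>S. H i \<omega> = 0")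
    case True
    then obtain i where "i \<in> S" "H i \<omega> = 0"
      by blast
    then have "(\<Prod>i\<in>S. ennreal (1 - decay \<theta> (H i \<omega>))) = 0"
      using finite_subset[OF S] by (intro prod_zero) (auto intro!: bexI[of _ i])
    then show ?thesis by (simp only: mult_zero_left)
  next
    case False
    then have "\<omega> \<in> holding_event \<longleftrightarrow> \<omega> \<in> tail_event S (\<lambda>_. 0)"
      using S by (auto simp: holding_event_def tail_event_def zero_less_iff_neq_zero)
    then show ?thesis by (simp add: indicator_def)
  qed
  then show ?thesis
    using nn_integral_tail_event[OF \<theta> S, of "\<lambda>_. 0"] by simp
qed

lemma integral_holding_event:
  assumes \<theta>: "0 < \<theta>" and S: "S \<subseteq> {..n}"
  shows "(\<integral>\<omega>. (\<Prod>i\<in>S. 1 - decay \<theta> (H i \<omega>)) * indicator holding_event \<omega> \<partial>M)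
      = c * (\<Prod>i\<in>S. \<theta> / (\<theta> + r i))"
proof -
  have "(\<lambda>\<omega>. ennreal ((\<Prod>i\<in>S. 1 - decay \<theta> (H i \<omega>)) * indicator holding_event \<omega>))
      = (\<lambda>\<omega>. (\<Prod>i\<in>S. ennreal (1 - decay \<theta> (H i \<omega>))) * indicator holding_event \<omega>)"
    using \<theta> by (auto simp: fun_eq_iff prod_ennreal decay_le_1 split: split_indicator)
  then have "(\<integral>\<^sup>+\<omega>. ennreal ((\<Prod>i\<in>S. 1 - decay \<theta> (H i \<omega>)) * indicator holding_event \<omega>) \<partial>M)
      = ennreal (c * (\<Prod>i\<in>S. \<theta> / (\<theta> + r i)))"
    by (simp add: nn_integral_holding_event[OF \<theta> S])
  moreover have "0 \<le> c * (\<Prod>i\<in>S. \<theta> / (\<theta> + r i))"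
    using c_nonneg \<theta> r_nonneg
    by (intro mult_nonneg_nonneg prod_nonneg divide_nonneg_pos add_pos_nonneg)
        (auto simp: less_imp_le)
  ultimately show ?thesis
    using \<theta> by (subst integral_eq_nn_integral)
        (auto simp: decay_le_1 intro!: AE_I2 prod_nonneg split: split_indicator)
qed

(* The hypotheses only describe the events {s i < H i}; writing e^(-theta h) as
   1 - (1 - e^(-theta h)) and expanding the product over subsets reduces the Laplace transform
   to nn_integral_holding_event. *)
theorem laplace_holding_times:
  assumes \<theta>: "0 < \<theta>"
  shows "(\<integral>\<^sup>+\<omega>. ennreal (\<Prod>i\<le>n. decay \<theta> (H i \<omega>)) * indicator holding_event \<omega> \<partial>M)
    = ennreal (c * (\<Prod>i\<le>n. r i / (r i + \<theta>)))"
proof -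
  let ?f = "\<lambda>S \<omega>. (\<Prod>i\<in>S. 1 - decay \<theta> (H i \<omega>)) * indicator holding_event \<omega>"
  have inclusion_exclusion: "(\<Prod>i\<le>n. decay \<theta> (H i \<omega>)) * indicator holding_event \<omega>
      = (\<Sum>S\<in>Pow {..n}. (- 1) ^ card S * ?f S \<omega>)" for \<omega>
    using prod_one_minus[of "{..n}" "\<lambda>i. 1 - decay \<theta> (H i \<omega>)"]
    by (simp add: sum_distrib_right mult.assoc)
  have integrable: "integrable M (?f S)" for S
    using \<theta> by (intro integrable_const_bound[where B = 1])
      (auto simp: abs_prod decay_le_1 decay_nonneg intro!: prod_le_1 split: split_indicator)
  have "(\<integral>\<omega>. (\<Prod>i\<le>n. decay \<theta> (H i \<omega>)) * indicator holding_event \<omega> \<partial>M)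
      = (\<Sum>S\<in>Pow {..n}. (- 1) ^ card S * (c * (\<Prod>i\<in>S. \<theta> / (\<theta> + r i))))"
    unfolding inclusion_exclusion using integrable
    by (simp add: integral_holding_event[OF \<theta>])
  also have "\<dots> = c * (\<Prod>i\<le>n. 1 - \<theta> / (\<theta> + r i))"
    by (simp add: prod_one_minus sum_distrib_left mult_ac)
  also have "(\<Prod>i\<le>n. 1 - \<theta> / (\<theta> + r i)) = (\<Prod>i\<le>n. r i / (r i + \<theta>))"
  proof (rule prod.cong)
    fix i
    have "0 < \<theta> + r i"
      using \<theta> r_nonneg[of i] by linarith
    then show "1 - \<theta> / (\<theta> + r i) = r i / (r i + \<theta>)"
      by (simp add: field_simps)
  qed simp
  finally have "(\<integral>\<omega>. (\<Prod>i\<le>n. decay \<theta> (H i \<omega>)) * indicator holding_event \<omega> \<partial>M)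
      = c * (\<Prod>i\<le>n. r i / (r i + \<theta>))" .
  moreover have "integrable M (\<lambda>\<omega>. (\<Prod>i\<le>n. decay \<theta> (H i \<omega>)) * indicator holding_event \<omega>)"
    unfolding inclusion_exclusion using integrable by simp
  ultimately have "(\<integral>\<^sup>+\<omega>. ennreal ((\<Prod>i\<le>n. decay \<theta> (H i \<omega>)) * indicator holding_event \<omega>) \<partial>M)
      = ennreal (c * (\<Prod>i\<le>n. r i / (r i + \<theta>)))"
    by (subst nn_integral_eq_integral) (auto simp: decay_nonneg intro!: AE_I2 prod_nonneg
        split: split_indicator)
  moreover have "(\<integral>\<^sup>+\<omega>. ennreal ((\<Prod>i\<le>n. decay \<theta> (H i \<omega>)) * indicator holding_event \<omega>) \<partial>M)
      = (\<integral>\<^sup>+\<omega>. ennreal (\<Prod>i\<le>n. decay \<theta> (H i \<omega>)) * indicator holding_event \<omega> \<partial>M)"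
    by (intro nn_integral_cong) (simp split: split_indicator)
  ultimately show ?thesis
    by simp
qed

end

section \<open>Counting jumps\<close>

lemma num_jumps_mono: "t \<le> t' \<Longrightarrow> num_jumps H t \<omega> \<le> num_jumps H t' \<omega>"
  unfolding num_jumps_def by (intro suminf_le) (auto intro: order_trans ennreal_leI)

lemma num_jumps_sq:
  "(num_jumps H \<sigma> \<omega>)\<^sup>2 = (\<Sum>n. (2 * of_nat n + 1) * (if (\<Sum>i\<le>n. H i \<omega>) \<le> ennreal \<sigma> then 1 else 0))"
proof -
  have "(\<Sum>i\<le>n. H i \<omega>) \<le> (\<Sum>i\<le>Suc n. H i \<omega>)" for n
    by (simp add: add_increasing2)
  then have "(\<Sum>i\<le>Suc n. H i \<omega>) \<le> ennreal \<sigma> \<Longrightarrow> (\<Sum>i\<le>n. H i \<omega>) \<le> ennreal \<sigma>" for n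
    by (rule order_trans)
  from square_count_of_downclosed[of "\<lambda>n. (\<Sum>i\<le>n. H i \<omega>) \<le> ennreal \<sigma>", OF this]
  show ?thesis
    unfolding num_jumps_def .
qed

lemma laplace_num_jumps_sq:
  assumes "0 < \<theta>"
  shows "(\<integral>\<^sup>+\<sigma>. ennreal (\<theta> * exp (- \<theta> * \<sigma>)) * indicator {0..} \<sigma> * (num_jumps H \<sigma> \<omega>)\<^sup>2 \<partial>lborel)
    = (\<Sum>n. (2 * of_nat n + 1) * ennreal (\<Prod>i\<le>n. decay \<theta> (H i \<omega>)))"
proof -
  let ?e = "\<lambda>\<sigma>. ennreal (\<theta> * exp (- \<theta> * \<sigma>)) * indicator {0..} \<sigma>"
  have "?e \<sigma> * (num_jumps H \<sigma> \<omega>)\<^sup>2 = (\<Sum>n. (2 * of_nat n + 1)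
      * (?e \<sigma> * indicator {(\<Sum>i\<le>n. H i \<omega>)..} (ennreal \<sigma>)))" for \<sigma>
    unfolding num_jumps_sq ennreal_suminf_cmult[symmetric] by (intro suminf_cong)
        (simp add: mult_ac)
  then have "(\<integral>\<^sup>+\<sigma>. ?e \<sigma> * (num_jumps H \<sigma> \<omega>)\<^sup>2 \<partial>lborel)
      = (\<Sum>n. \<integral>\<^sup>+\<sigma>. (2 * of_nat n + 1) * (?e \<sigma> * indicator {(\<Sum>i\<le>n. H i \<omega>)..} (ennreal \<sigma>)) \<partial>lborel)"
    by (simp only:) (rule nn_integral_suminf, measurable)
  also have "\<dots> = (\<Sum>n. (2 * of_nat n + 1) * ennreal (decay \<theta> (\<Sum>i\<le>n. H i \<omega>)))"
    by (subst nn_integral_cmult) (simp_all add: decay_eq_nn_integral[OF assms])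
  finally show ?thesis
    by (simp add: decay_sum)
qed

section \<open>Mass-action systems\<close>

lemma ffall_nonneg: "0 \<le> ffall n k"
proof (cases "k \<le> n")
  case True
  then show ?thesis unfolding ffall_def by (intro prod_nonneg) auto
next
  case False
  then have "n \<in> {..<k}" by auto
  then show ?thesis unfolding ffall_def by (subst prod_zero) auto
qed

lemma ffall_neq_0_imp_le: "ffall n k \<noteq> 0 \<Longrightarrow> k \<le> n"
proof (rule ccontr)
  assume "ffall n k \<noteq> 0" "\<not> k \<le> n"
  then have "n \<in> {..<k}" by auto
  then have "ffall n k = 0" unfolding ffall_def by (subst prod_zero) auto
  with \<open>ffall n k \<noteq> 0\<close> show False by simp
qed

locale mass_action_system =
  fixes U :: "'u set" and \<kappa> :: "'u \<Rightarrow> real" and y y' :: "'u \<Rightarrow> 'd::finite \<Rightarrow> nat"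
    and z0 :: "'d \<Rightarrow> nat" and \<pi> :: "('d \<Rightarrow> nat) \<Rightarrow> real"
  assumes finite_U: "finite U" and rate_constant_pos: "\<forall>u\<in>U. 0 < \<kappa> u"
    and irreducible: "\<forall>x x'. (react_step U \<kappa> y y')\<^sup>*\<^sup>* z0 x \<and> (react_step U \<kappa> y y')\<^sup>*\<^sup>* z0 x'
               \<longrightarrow> (react_step U \<kappa> y y')\<^sup>*\<^sup>* x x'"
    and stationary: "ctmc_stationary U \<kappa> y y' {x. (react_step U \<kappa> y y')\<^sup>*\<^sup>* z0 x} \<pi>"
    and second_moment: "(\<lambda>x. \<Sum>u\<in>U. (ma_rate \<kappa> y u x)\<^sup>2 * \<pi> x) summable_on UNIV"
begin

abbreviation rate :: "'u \<Rightarrow> ('d \<Rightarrow> nat) \<Rightarrow> real" where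
  "rate \<equiv> ma_rate \<kappa> y"

abbreviation q :: "('d \<Rightarrow> nat) \<Rightarrow> real" where
  "q \<equiv> total_rate U \<kappa> y y'"

abbreviation moving_reactions :: "'u set" where
  "moving_reactions \<equiv> moving U y y'"

(* Truncated subtraction: react u x is the intended state only where y u \<le> x, which holds
   whenever rate u x \<noteq> 0. *)
definition react :: "'u \<Rightarrow> ('d \<Rightarrow> nat) \<Rightarrow> 'd \<Rightarrow> nat" where
  "react u x = (\<lambda>i. x i - y u i + y' u i)"

definition unreact :: "'u \<Rightarrow> ('d \<Rightarrow> nat) \<Rightarrow> 'd \<Rightarrow> nat" where
  "unreact u x = (\<lambda>i. x i - y' u i + y u i)"

definition trans_rate :: "('d \<Rightarrow> nat) \<Rightarrow> ('d \<Rightarrow> nat) \<Rightarrow> real" where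
  "trans_rate x x' = (\<Sum>u\<in>moving_reactions. if react u x = x' then rate u x else 0)"

lemma moving_reactions_subset: "moving_reactions \<subseteq> U"
  by (auto simp: moving_def)

lemma finite_moving_reactions: "finite moving_reactions"
  using finite_U moving_reactions_subset by (rule finite_subset[rotated])

lemma rate_nonneg: "u \<in> moving_reactions \<Longrightarrow> 0 \<le> rate u x"
  using rate_constant_pos moving_reactions_subset unfolding ma_rate_def
  by (intro mult_nonneg_nonneg prod_nonneg ffall_nonneg) (auto intro: less_imp_le)

lemma rate_neq_0_imp_le: "rate u x \<noteq> 0 \<Longrightarrow> y u i \<le> x i"
  unfolding ma_rate_def by (auto intro: ffall_neq_0_imp_le)

lemma total_rate_nonneg: "0 \<le> q x"
  unfolding total_rate_def by (intro sum_nonneg rate_nonneg)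

lemma trans_rate_nonneg: "0 \<le> trans_rate x x'"
  unfolding trans_rate_def by (intro sum_nonneg) (auto intro: rate_nonneg)

lemma trans_rate_le_total_rate: "trans_rate x x' \<le> q x"
  unfolding trans_rate_def total_rate_def by (intro sum_mono) (auto intro: rate_nonneg)

lemma pi_nonneg: "0 \<le> \<pi> x"
  using stationary by (simp add: ctmc_stationary_def)

lemma react_eq_iff:
  assumes "rate u x \<noteq> 0"
  shows "react u x = x' \<longleftrightarrow> (\<forall>i. y' u i \<le> x' i) \<and> x = unreact u x'"
proof
  have le: "y u i \<le> x i" for i
    using rate_neq_0_imp_le[OF assms] .
  assume "react u x = x'"
  then have "x' i = x i - y u i + y' u i" for i
    by (auto simp: react_def)
  then have "y' u i \<le> x' i \<and> x i = x' i - y' u i + y u i" for i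
    using le[of i] by simp
  then show "(\<forall>i. y' u i \<le> x' i) \<and> x = unreact u x'"
    by (auto simp: unreact_def fun_eq_iff)
next
  assume "(\<forall>i. y' u i \<le> x' i) \<and> x = unreact u x'"
  then show "react u x = x'"
    using rate_neq_0_imp_le[OF assms] by (auto simp: react_def unreact_def fun_eq_iff)
qed

lemma ennreal_trans_rate:
  "ennreal (trans_rate x x') = (\<Sum>u\<in>moving_reactions. ennreal (rate u x) * indicator {react u x} x')"
  unfolding trans_rate_def
  by (subst sum_ennreal[symmetric]) (auto intro!: sum.cong rate_nonneg split: split_indicator)

lemma count_sum_trans_rate: "count_sum (\<lambda>x'. ennreal (trans_rate x x')) = ennreal (q x)"
  unfolding ennreal_trans_rate total_rate_def
  by (simp add: nn_integral_sum nn_integral_cmult sum_ennreal rate_nonneg)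

lemma balance:
  "\<pi> x * q x = (\<Sum>u\<in>moving_reactions.
      if \<forall>i. y' u i \<le> x i then \<pi> (unreact u x) * rate u (unreact u x) else 0)"
  using stationary unfolding ctmc_stationary_def unreact_def by blast

lemma count_sum_stationary: "count_sum (\<lambda>x. ennreal (\<pi> x * trans_rate x x'))
    = ennreal (\<pi> x' * q x')"
proof -
  define inflow where
    "inflow u = (if \<forall>i. y' u i \<le> x' i then \<pi> (unreact u x') * rate u (unreact u x') else 0)" for u
  have inflow_nonneg: "u \<in> moving_reactions \<Longrightarrow> 0 \<le> inflow u" for u
    by (simp add: inflow_def pi_nonneg rate_nonneg)
  have "ennreal (\<pi> x * trans_rate x x') = (\<Sum>u\<in>moving_reactions. ennreal (inflow u)
      * indicator {unreact u x'} x)" for x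
  proof -
    have "ennreal (\<pi> x * (if react u x = x' then rate u x else 0))
        = ennreal (inflow u) * indicator {unreact u x'} x" for u
    proof (cases "rate u x = 0")
      case False
      then show ?thesis
        using react_eq_iff[OF False, of x'] by (auto simp: inflow_def split: split_indicator)
    qed (auto simp: inflow_def split: split_indicator)
    then show ?thesis
      unfolding trans_rate_def sum_distrib_left
      by (subst sum_ennreal[symmetric]) (auto intro!: mult_nonneg_nonneg pi_nonneg rate_nonneg)
  qed
  then have "count_sum (\<lambda>x. ennreal (\<pi> x * trans_rate x x'))
      = (\<Sum>u\<in>moving_reactions. ennreal (inflow u))"
    by (simp add: nn_integral_sum nn_integral_cmult)
  also have "\<dots> = ennreal (\<pi> x' * q x')"
    unfolding balance inflow_def[symmetric] using inflow_nonneg by (rule sum_ennreal)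
  finally show ?thesis .
qed

lemma trans_rate_stationary_rates:
  "stationary_rates (\<lambda>x x'. ennreal (trans_rate x x')) (\<lambda>x. ennreal (q x)) (\<lambda>x. ennreal (\<pi> x))"
proof unfold_locales
  show "count_sum (\<lambda>x. ennreal (\<pi> x) * ennreal (trans_rate x x'))
      = ennreal (\<pi> x') * ennreal (q x')" for x'
    using count_sum_stationary[of x'] by (simp add: ennreal_mult pi_nonneg trans_rate_nonneg
        total_rate_nonneg)
qed (simp_all add: count_sum_trans_rate)

lemma react_step_preserves_pos:
  assumes "react_step U \<kappa> y y' a b" "0 < \<pi> a"
  shows "0 < \<pi> b"
proof -
  obtain u where u: "u \<in> moving_reactions" "0 < rate u a" "b = react u a"
    using assms(1) unfolding react_step_def react_def by blast
  then have b: "(\<forall>i. y' u i \<le> b i) \<and> a = unreact u b"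
    using react_eq_iff[of u a b] by simp
  have "0 < \<pi> a * rate u a"
    using u assms(2) by simp
  also have "\<dots> = (if \<forall>i. y' u i \<le> b i then \<pi> (unreact u b) * rate u (unreact u b) else 0)"
    using b by simp
  also have "\<dots> \<le> (\<Sum>u\<in>moving_reactions.
      if \<forall>i. y' u i \<le> b i then \<pi> (unreact u b) * rate u (unreact u b) else 0)"
    by (rule member_le_sum) (auto intro!: mult_nonneg_nonneg pi_nonneg rate_nonneg u
        finite_moving_reactions)
  also have "\<dots> = \<pi> b * q b"
    by (simp add: balance)
  finally show ?thesis
    using pi_nonneg[of b] total_rate_nonneg[of b] by (simp add: zero_less_mult_iff)
qed

lemma pi_initial_pos: "0 < \<pi> z0"
proof -
  have "\<exists>x. \<pi> x \<noteq> 0"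
  proof (rule ccontr)
    assume "\<not> (\<exists>x. \<pi> x \<noteq> 0)"
    then have "(\<pi> has_sum 0) UNIV"
      by (simp add: has_sum_0)
    with stationary show False
      unfolding ctmc_stationary_def using has_sum_unique by fastforce
  qed
  then obtain x where x: "0 < \<pi> x"
    using pi_nonneg by (metis less_eq_real_def)
  then have "(react_step U \<kappa> y y')\<^sup>*\<^sup>* z0 x"
    using stationary unfolding ctmc_stationary_def by force
  then have "(react_step U \<kappa> y y')\<^sup>*\<^sup>* x z0"
    using irreducible by blast
  then show ?thesis
    using x by (induction rule: rtranclp_induct) (auto intro: react_step_preserves_pos)
qed

lemma total_rate_sq_le: "(q x)\<^sup>2 \<le> (real (card U))\<^sup>2 * (\<Sum>u\<in>U. (rate u x)\<^sup>2)"
proof -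
  define m where "m = sqrt (\<Sum>u\<in>U. (rate u x)\<^sup>2)"
  have "rate u x \<le> m" if "u \<in> U" for u
    using that finite_U member_le_sum[of u U "\<lambda>u. (rate u x)\<^sup>2"]
    unfolding m_def by (simp add: real_le_rsqrt)
  then have "q x \<le> real (card moving_reactions) * m"
    unfolding total_rate_def using moving_reactions_subset by (intro sum_bounded_above) auto
  also have "\<dots> \<le> real (card U) * m"
    unfolding m_def using card_mono[OF finite_U moving_reactions_subset] by (intro mult_right_mono)
        (auto intro: sum_nonneg)
  finally have "(q x)\<^sup>2 \<le> (real (card U) * m)\<^sup>2"
    using total_rate_nonneg by (intro power_mono) auto
  then show ?thesis
    unfolding m_def power_mult_distrib by (simp add: sum_nonneg)
qed

lemma count_sum_pi_total_rate_sq: "count_sum (\<lambda>x. ennreal (\<pi> x) * ennreal (q x) ^ 2) < \<top>"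
proof -
  have "count_sum (\<lambda>x. ennreal (\<pi> x) * ennreal (q x) ^ 2)
      \<le> count_sum (\<lambda>x. ennreal ((real (card U))\<^sup>2 * ((\<Sum>u\<in>U. (rate u x)\<^sup>2) * \<pi> x)))"
  proof (rule nn_integral_mono)
    fix x
    have "\<pi> x * (q x)\<^sup>2 \<le> (real (card U))\<^sup>2 * ((\<Sum>u\<in>U. (rate u x)\<^sup>2) * \<pi> x)"
      using mult_left_mono[OF total_rate_sq_le pi_nonneg] by (simp add: mult_ac)
    moreover have "ennreal (\<pi> x) * ennreal (q x) ^ 2 = ennreal (\<pi> x * (q x)\<^sup>2)"
      by (simp add: ennreal_mult ennreal_power pi_nonneg total_rate_nonneg)
    ultimately show "ennreal (\<pi> x) * ennreal (q x) ^ 2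
        \<le> ennreal ((real (card U))\<^sup>2 * ((\<Sum>u\<in>U. (rate u x)\<^sup>2) * \<pi> x))"
      by (simp add: ennreal_leI)
  qed
  also have "\<dots> = ennreal ((real (card U))\<^sup>2) * count_sum (\<lambda>x. ennreal ((\<Sum>u\<in>U. (rate u x)\<^sup>2) * \<pi> x))"
    by (simp add: ennreal_mult nn_integral_cmult pi_nonneg sum_nonneg)
  also have "\<dots> < \<top>"
    using second_moment
    by (simp add: ennreal_mult_less_top count_sum_less_top_of_summable_on sum_distrib_right
        pi_nonneg sum_nonneg)
  finally show ?thesis .
qed

lemma count_sum_pi_total_rate: "count_sum (\<lambda>x. ennreal (\<pi> x) * ennreal (q x)) < \<top>"
proof -
  have "count_sum (\<lambda>x. ennreal (\<pi> x) * ennreal (q x))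
      \<le> count_sum (\<lambda>x. ennreal (\<pi> x) + ennreal (\<pi> x) * ennreal (q x) ^ 2)"
  proof (rule nn_integral_mono)
    fix x
    have "q x \<le> 1 + (q x)\<^sup>2"
      using sum_squares_bound[of 1 "q x"] total_rate_nonneg[of x] by simp
    then have "\<pi> x * q x \<le> \<pi> x * (1 + (q x)\<^sup>2)"
      using pi_nonneg by (rule mult_left_mono)
    then have "\<pi> x * q x \<le> \<pi> x + \<pi> x * (q x)\<^sup>2"
      by (simp add: distrib_left)
    then have "ennreal (\<pi> x * q x) \<le> ennreal (\<pi> x + \<pi> x * (q x)\<^sup>2)"
      by (rule ennreal_leI)
    then show "ennreal (\<pi> x) * ennreal (q x) \<le> ennreal (\<pi> x) + ennreal (\<pi> x) * ennreal (q x) ^ 2"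
      by (simp add: ennreal_mult ennreal_power pi_nonneg total_rate_nonneg)
  qed
  also have "\<dots> = count_sum (\<lambda>x. ennreal (\<pi> x)) + count_sum (\<lambda>x. ennreal (\<pi> x) * ennreal (q x) ^ 2)"
    by (simp add: nn_integral_add)
  also have "\<dots> < \<top>"
  proof -
    have "\<pi> summable_on UNIV"
      using stationary by (auto simp: ctmc_stationary_def summable_on_def)
    then show ?thesis
      using count_sum_pi_total_rate_sq count_sum_less_top_of_summable_on[of \<pi>] pi_nonneg by simp
  qed
  finally show ?thesis .
qed

abbreviation jp :: "('d \<Rightarrow> nat) \<Rightarrow> ('d \<Rightarrow> nat) \<Rightarrow> real" where
  "jp \<equiv> jump_prob U \<kappa> y y'"

lemma jump_prob_nonneg: "0 \<le> jp x x'"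
  unfolding jump_prob_def using total_rate_nonneg[of x]
  by (auto intro!: divide_nonneg_nonneg sum_nonneg rate_nonneg)

lemma jump_prob_eq: "q x \<noteq> 0 \<Longrightarrow> jp x x' = trans_rate x x' / q x"
  unfolding jump_prob_def trans_rate_def react_def using finite_moving_reactions
  by (simp add: sum.inter_filter)

lemma count_sum_jump_prob: "count_sum (\<lambda>x'. ennreal (jp x x')) = 1"
proof (cases "q x = 0")
  case True
  then have "(\<lambda>x'. ennreal (jp x x')) = (\<lambda>x'. indicator {x} x')"
    by (auto simp: jump_prob_def fun_eq_iff split: split_indicator)
  then show ?thesis by simp
next
  case False
  then have "0 < q x"
    using total_rate_nonneg[of x] by simp
  then have "count_sum (\<lambda>x'. ennreal (jp x x'))
      = count_sum (\<lambda>x'. ennreal (trans_rate x x') / ennreal (q x))"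
    by (simp add: jump_prob_eq divide_ennreal trans_rate_nonneg)
  also have "\<dots> = 1"
    using \<open>0 < q x\<close> by (simp add: nn_integral_divide count_sum_trans_rate divide_ennreal)
  finally show ?thesis .
qed

lemma ennreal_divide_exit_rate:
  "0 \<le> a \<Longrightarrow> 0 < \<theta> \<Longrightarrow> ennreal a / (ennreal (q x) + ennreal \<theta>) = ennreal (a / (q x + \<theta>))"
  using total_rate_nonneg[of x] by (simp add: ennreal_plus[symmetric] divide_ennreal
      del: ennreal_plus)

lemma path_weight_jump_prob:
  "path_weight (\<lambda>a b. ennreal (jp a b)) (\<lambda>_. 1) z xs
      = ennreal (\<Prod>i<length xs. jp ((z # xs) ! i) ((z # xs) ! Suc i))"
  by (induction xs arbitrary: z)
     (simp_all add: prod.lessThan_Suc_shift ennreal_mult[symmetric] jump_prob_nonneg prod_nonneg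
         del: prod.lessThan_Suc)

lemma path_weight_resolvent:
  assumes "0 < \<theta>"
  shows "path_weight (resolvent (\<lambda>x x'. ennreal (trans_rate x x')) (\<lambda>x. ennreal (q x)) \<theta>)
      (\<lambda>x. ennreal (q x) / (ennreal (q x) + ennreal \<theta>)) z xs
    = ennreal ((\<Prod>i<length xs. jp ((z # xs) ! i) ((z # xs) ! Suc i))
        * (\<Prod>i\<le>length xs. q ((z # xs) ! i) / (q ((z # xs) ! i) + \<theta>)))"
proof (induction xs arbitrary: z)
  case Nil
  then show ?case
    using assms by (simp add: ennreal_divide_exit_rate total_rate_nonneg)
next
  case (Cons x xs)
  let ?P = "(\<Prod>i<length xs. jp ((x # xs) ! i) ((x # xs) ! Suc i))
      * (\<Prod>i\<le>length xs. q ((x # xs) ! i) / (q ((x # xs) ! i) + \<theta>))"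
  have P_nonneg: "0 \<le> ?P"
    using assms total_rate_nonneg
    by (intro mult_nonneg_nonneg prod_nonneg jump_prob_nonneg divide_nonneg_pos add_nonneg_pos) auto
  have jump: "trans_rate z x / (q z + \<theta>) = jp z x * (q z / (q z + \<theta>))"
  proof (cases "q z = 0")
    case True
    then have "trans_rate z x = 0"
      using trans_rate_le_total_rate[of z x] trans_rate_nonneg[of z x] by simp
    with True show ?thesis by simp
  qed (simp add: jump_prob_eq)
  have "path_weight (resolvent (\<lambda>x x'. ennreal (trans_rate x x')) (\<lambda>x. ennreal (q x)) \<theta>)
      (\<lambda>x. ennreal (q x) / (ennreal (q x) + ennreal \<theta>)) z (x # xs)
      = ennreal (trans_rate z x / (q z + \<theta>)) * ennreal ?P"
    using assms by (simp add: Cons.IH resolvent_def ennreal_divide_exit_rate trans_rate_nonneg)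
  also have "\<dots> = ennreal (trans_rate z x / (q z + \<theta>) * ?P)"
    by (rule ennreal_mult''[OF P_nonneg, symmetric])
  finally show ?case
    unfolding jump
    by (simp add: prod.lessThan_Suc_shift prod.atMost_Suc_shift mult_ac
        del: prod.lessThan_Suc prod.atMost_Suc)
qed

end

section \<open>The jump chain of a mass-action system\<close>

locale mass_action_process = mass_action_system U \<kappa> y y' z0 \<pi> + prob_space M
  for U :: "'u set" and \<kappa> :: "'u \<Rightarrow> real" and y y' :: "'u \<Rightarrow> 'd::finite \<Rightarrow> nat"
    and z0 :: "'d \<Rightarrow> nat" and \<pi> :: "('d \<Rightarrow> nat) \<Rightarrow> real" and M :: "'w measure" +
  fixes Y :: "nat \<Rightarrow> 'w \<Rightarrow> ('d \<Rightarrow> nat)" and H :: "nat \<Rightarrow> 'w \<Rightarrow> ennreal"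
  assumes jump_hold: "ctmc_jump_hold M U \<kappa> y y' z0 Y H"
begin

lemma Y_measurable[measurable]: "Y n \<in> measurable M (count_space UNIV)"
  using jump_hold by (simp add: ctmc_jump_hold_def)

lemma H_measurable[measurable]: "H n \<in> borel_measurable M"
  using jump_hold by (simp add: ctmc_jump_hold_def)

definition path_prob :: "nat \<Rightarrow> (nat \<Rightarrow> 'd \<Rightarrow> nat) \<Rightarrow> real" where
  "path_prob n x = (if x 0 = z0 then 1 else 0) * (\<Prod>i<n. jp (x i) (x (Suc i)))"

definition path_event :: "nat \<Rightarrow> (nat \<Rightarrow> 'd \<Rightarrow> nat) \<Rightarrow> 'w set" where
  "path_event n x = {\<omega>\<in>space M. (\<forall>i\<le>n. Y i \<omega> = x i) \<and> (\<forall>i\<le>n. 0 < H i \<omega>)}"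

lemma exponential_holding_times:
  "exponential_holding_times M {\<omega>\<in>space M. \<forall>i\<le>n. Y i \<omega> = x i} H (\<lambda>i. q (x i)) n (path_prob n x)"
proof unfold_locales
  show "measure M {\<omega>\<in>{\<omega>\<in>space M. \<forall>i\<le>n. Y i \<omega> = x i}. \<forall>i\<le>n. ennreal (s i) < H i \<omega>}
      = path_prob n x * (\<Prod>i\<le>n. exp (- q (x i) * s i))" if "\<And>i. 0 \<le> s i" for s
    using jump_hold that unfolding ctmc_jump_hold_def path_prob_def by (simp add: conj_assoc)
qed (auto simp: total_rate_nonneg)

lemma laplace_path_event:
  assumes "0 < \<theta>"
  shows "(\<integral>\<^sup>+\<omega>. ennreal (\<Prod>i\<le>n. decay \<theta> (H i \<omega>)) * indicator (path_event n x) \<omega> \<partial>M)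
    = ennreal (path_prob n x * (\<Prod>i\<le>n. q (x i) / (q (x i) + \<theta>)))"
proof -
  interpret exponential_holding_times M "{\<omega>\<in>space M. \<forall>i\<le>n. Y i \<omega> = x i}" H
      "\<lambda>i. q (x i)" n "path_prob n x"
    by (rule exponential_holding_times)
  have "holding_event = path_event n x"
    by (auto simp: holding_event_def path_event_def)
  with laplace_holding_times[OF assms] show ?thesis
    by simp
qed

lemma measure_path_event: "emeasure M (path_event n x) = ennreal (path_prob n x)"
proof -
  interpret exponential_holding_times M "{\<omega>\<in>space M. \<forall>i\<le>n. Y i \<omega> = x i}" H
      "\<lambda>i. q (x i)" n "path_prob n x"
    by (rule exponential_holding_times)
  have "holding_event = path_event n x"
    by (auto simp: holding_event_def path_event_def)
  with measure_holding_event show ?thesis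
    by (simp add: emeasure_eq_measure)
qed

definition good_event :: "nat \<Rightarrow> 'w set" where
  "good_event n = {\<omega>\<in>space M. Y 0 \<omega> = z0 \<and> (\<forall>i\<le>n. 0 < H i \<omega>)}"

definition jump_path :: "nat \<Rightarrow> 'w \<Rightarrow> ('d \<Rightarrow> nat) list" where
  "jump_path n \<omega> = map (\<lambda>i. Y (Suc i) \<omega>) [0..<n]"

lemma good_event_sets[measurable]: "good_event n \<in> sets M"
  unfolding good_event_def by measurable

lemma path_event_sets[measurable]: "path_event n x \<in> sets M"
  unfolding path_event_def by measurable

lemma in_path_event_iff:
  "length xs = n \<and> \<omega> \<in> path_event n ((!) (z0 # xs)) \<longleftrightarrow> xs = jump_path n \<omega> \<and> \<omega> \<in> good_event n"
proof
  assume xs: "length xs = n \<and> \<omega> \<in> path_event n ((!) (z0 # xs))"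
  then have "xs = jump_path n \<omega>"
    by (intro nth_equalityI) (auto simp: jump_path_def path_event_def simp flip: Suc_le_eq)
  with xs show "xs = jump_path n \<omega> \<and> \<omega> \<in> good_event n"
    by (auto simp: path_event_def good_event_def)
next
  assume "xs = jump_path n \<omega> \<and> \<omega> \<in> good_event n"
  then show "length xs = n \<and> \<omega> \<in> path_event n ((!) (z0 # xs))"
    by (auto simp: path_event_def good_event_def jump_path_def less_Suc_eq_0_disj nth_Cons')
qed

lemma nn_integral_good_event:
  assumes [measurable]: "g \<in> borel_measurable M"
  shows "(\<integral>\<^sup>+\<omega>. g \<omega> * indicator (good_event n) \<omega> \<partial>M)
    = count_sum (\<lambda>xs. if length xs = n
        then \<integral>\<^sup>+\<omega>. g \<omega> * indicator (path_event n ((!) (z0 # xs))) \<omega> \<partial>M else 0)"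
proof -
  have "g \<omega> * indicator (good_event n) \<omega>
      = count_sum (\<lambda>xs. if length xs = n
          then g \<omega> * indicator (path_event n ((!) (z0 # xs))) \<omega> else 0)" for \<omega>
  proof -
    have "(\<lambda>xs. if length xs = n then g \<omega> * indicator (path_event n ((!) (z0 # xs))) \<omega> else 0)
        = (\<lambda>xs. g \<omega> * indicator (good_event n) \<omega> * indicator {jump_path n \<omega>} xs)"
      using in_path_event_iff[of _ n \<omega>] by (auto simp: fun_eq_iff split: split_indicator)
    then show ?thesis
      by (simp add: nn_integral_cmult)
  qed
  then have "(\<integral>\<^sup>+\<omega>. g \<omega> * indicator (good_event n) \<omega> \<partial>M)
      = (\<integral>\<^sup>+\<omega>. count_sum (\<lambda>xs. if length xs = n
          then g \<omega> * indicator (path_event n ((!) (z0 # xs))) \<omega> else 0) \<partial>M)"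
    by simp
  also have "\<dots> = count_sum (\<lambda>xs. \<integral>\<^sup>+\<omega>. (if length xs = n
      then g \<omega> * indicator (path_event n ((!) (z0 # xs))) \<omega> else 0) \<partial>M)"
    by (rule nn_integral_count_space_nn_integral) auto
  also have "\<dots> = count_sum (\<lambda>xs. if length xs = n
      then \<integral>\<^sup>+\<omega>. g \<omega> * indicator (path_event n ((!) (z0 # xs))) \<omega> \<partial>M else 0)"
    by (intro nn_integral_cong) auto
  finally show ?thesis .
qed

lemma good_event_ae: "AE \<omega> in M. \<omega> \<in> good_event n"
proof -
  have "emeasure M (good_event n)
      = count_sum (\<lambda>xs. if length xs = n
          then path_weight (\<lambda>a b. ennreal (jp a b)) (\<lambda>_. 1) z0 xs else 0)"
    using nn_integral_good_event[of "\<lambda>_. 1" n]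
    by (simp add: measure_path_event path_prob_def path_weight_jump_prob cong: if_cong)
  also have "\<dots> = 1"
  proof -
    have "kernel_power (\<lambda>a b. ennreal (jp a b)) m (\<lambda>_. 1) x = 1" for m x
      by (induction m arbitrary: x) (simp_all add: kernel_apply_def count_sum_jump_prob)
    then show ?thesis
      by (simp add: count_sum_path_weight)
  qed
  finally show ?thesis
    by (simp add: prob_eq_1 emeasure_eq_measure)
qed

abbreviation resolvent_kernel :: "real \<Rightarrow> ('d \<Rightarrow> nat) \<Rightarrow> ('d \<Rightarrow> nat) \<Rightarrow> ennreal" where
  "resolvent_kernel \<theta> \<equiv> resolvent (\<lambda>x x'. ennreal (trans_rate x x')) (\<lambda>x. ennreal (q x)) \<theta>"

abbreviation jump_first :: "real \<Rightarrow> ('d \<Rightarrow> nat) \<Rightarrow> ennreal" where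
  "jump_first \<theta> x \<equiv> ennreal (q x) / (ennreal (q x) + ennreal \<theta>)"

lemma laplace_jump_time:
  assumes "0 < \<theta>"
  shows "(\<integral>\<^sup>+\<omega>. ennreal (\<Prod>i\<le>n. decay \<theta> (H i \<omega>)) \<partial>M)
      = kernel_power (resolvent_kernel \<theta>) n (jump_first \<theta>) z0"
proof -
  have "(\<integral>\<^sup>+\<omega>. ennreal (\<Prod>i\<le>n. decay \<theta> (H i \<omega>)) \<partial>M)
      = (\<integral>\<^sup>+\<omega>. ennreal (\<Prod>i\<le>n. decay \<theta> (H i \<omega>)) * indicator (good_event n) \<omega> \<partial>M)"
  proof (rule nn_integral_cong_AE)
    show "AE \<omega> in M. ennreal (\<Prod>i\<le>n. decay \<theta> (H i \<omega>))
        = ennreal (\<Prod>i\<le>n. decay \<theta> (H i \<omega>)) * indicator (good_event n) \<omega>"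
      using good_event_ae[of n] by eventually_elim simp
  qed
  also have "\<dots> = count_sum (\<lambda>xs. if length xs = n
      then \<integral>\<^sup>+\<omega>. ennreal (\<Prod>i\<le>n. decay \<theta> (H i \<omega>))
          * indicator (path_event n ((!) (z0 # xs))) \<omega> \<partial>M else 0)"
    by (rule nn_integral_good_event) measurable
  also have "\<dots> = count_sum (\<lambda>xs. if length xs = n
      then path_weight (resolvent_kernel \<theta>) (jump_first \<theta>) z0 xs else 0)"
    using assms
    by (intro nn_integral_cong) (simp add: laplace_path_event path_weight_resolvent path_prob_def)
  also have "\<dots> = kernel_power (resolvent_kernel \<theta>) n (jump_first \<theta>) z0"
    by (rule count_sum_path_weight)
  finally show ?thesis .
qed

abbreviation num_jumps_sq_moment :: "real \<Rightarrow> ennreal" where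
  "num_jumps_sq_moment t \<equiv> \<integral>\<^sup>+\<omega>. (num_jumps H t \<omega>)\<^sup>2 \<partial>M"

lemma laplace_num_jumps_sq_moment:
  assumes "0 < \<theta>"
  shows "(\<integral>\<^sup>+\<sigma>. ennreal (\<theta> * exp (- \<theta> * \<sigma>)) * indicator {0..} \<sigma> * num_jumps_sq_moment \<sigma> \<partial>lborel)
    = (\<Sum>n. (2 * of_nat n + 1) * kernel_power (resolvent_kernel \<theta>) n (jump_first \<theta>) z0)"
proof -
  let ?f = "\<lambda>\<omega> \<sigma>. ennreal (\<theta> * exp (- \<theta> * \<sigma>)) * indicator {0..} \<sigma> * (num_jumps H \<sigma> \<omega>)\<^sup>2"
  have "(\<integral>\<^sup>+\<sigma>. ennreal (\<theta> * exp (- \<theta> * \<sigma>)) * indicator {0..} \<sigma> * num_jumps_sq_moment \<sigma> \<partial>lborel)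
      = (\<integral>\<^sup>+\<sigma>. \<integral>\<^sup>+\<omega>. ?f \<omega> \<sigma> \<partial>M \<partial>lborel)"
    by (intro nn_integral_cong nn_integral_cmult[symmetric]) (simp add: num_jumps_def)
  also have "\<dots> = (\<integral>\<^sup>+\<omega>. \<integral>\<^sup>+\<sigma>. ?f \<omega> \<sigma> \<partial>lborel \<partial>M)"
  proof (rule pair_sigma_finite.Fubini')
    show "pair_sigma_finite M lborel"
      by (intro pair_sigma_finite.intro sigma_finite_measure_axioms
          lborel.sigma_finite_measure_axioms)
    show "case_prod ?f \<in> borel_measurable (M \<Otimes>\<^sub>M lborel)"
      unfolding num_jumps_def case_prod_beta' by measurable
  qed
  also have "\<dots> = (\<integral>\<^sup>+\<omega>. (\<Sum>n. (2 * of_nat n + 1) * ennreal (\<Prod>i\<le>n. decay \<theta> (H i \<omega>))) \<partial>M)"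
    by (intro nn_integral_cong) (rule laplace_num_jumps_sq[OF assms])
  also have "\<dots> = (\<Sum>n. (2 * of_nat n + 1) * kernel_power (resolvent_kernel \<theta>) n (jump_first \<theta>) z0)"
    by (simp add: nn_integral_suminf nn_integral_cmult laplace_jump_time[OF assms])
  finally show ?thesis .
qed

lemma laplace_num_jumps_sq_moment_le:
  assumes \<theta>: "0 < \<theta>" "\<theta> \<le> 1"
  shows "ennreal (\<pi> z0) * (ennreal (\<theta>\<^sup>2) *
      (\<integral>\<^sup>+\<sigma>. ennreal (\<theta> * exp (- \<theta> * \<sigma>)) * indicator {0..} \<sigma> * num_jumps_sq_moment \<sigma> \<partial>lborel))
    \<le> count_sum (\<lambda>x. ennreal (\<pi> x) * ennreal (q x))
        + 2 * count_sum (\<lambda>x. ennreal (\<pi> x) * ennreal (q x) ^ 2)"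
proof -
  interpret rates: stationary_rates "\<lambda>x x'. ennreal (trans_rate x x')" "\<lambda>x. ennreal (q x)"
      "\<lambda>x. ennreal (\<pi> x)"
    by (rule trans_rate_stationary_rates)
  let ?a = "\<lambda>n. kernel_power (resolvent_kernel \<theta>) n (jump_first \<theta>)"
  have "(\<Sum>n. (2 * of_nat n + 1) * (ennreal (\<pi> z0) * ?a n z0))
      = ennreal (\<pi> z0) * (\<Sum>n. (2 * of_nat n + 1) * ?a n z0)"
    by (subst ennreal_suminf_cmult[symmetric]) (simp only: mult.left_commute)
  moreover have "ennreal (\<theta>\<^sup>2) = ennreal \<theta> ^ 2"
    using \<theta> by (simp add: ennreal_power)
  ultimately have "ennreal (\<pi> z0) * (ennreal (\<theta>\<^sup>2) *
      (\<integral>\<^sup>+\<sigma>. ennreal (\<theta> * exp (- \<theta> * \<sigma>)) * indicator {0..} \<sigma> * num_jumps_sq_moment \<sigma> \<partial>lborel))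
      = ennreal \<theta> ^ 2 * (\<Sum>n. (2 * of_nat n + 1) * (ennreal (\<pi> z0) * ?a n z0))"
    by (simp only: laplace_num_jumps_sq_moment[OF \<theta>(1)] mult.left_commute)
  also have "\<dots> \<le> ennreal \<theta> ^ 2 * (\<Sum>n. (2 * of_nat n + 1) * count_sum (\<lambda>x. ennreal (\<pi> x) * ?a n x))"
    by (intro mult_left_mono suminf_le nn_integral_ge_point) auto
  also have "\<dots> \<le> ennreal \<theta> * count_sum (\<lambda>x. ennreal (\<pi> x) * ennreal (q x))
      + 2 * count_sum (\<lambda>x. ennreal (\<pi> x) * ennreal (q x) ^ 2)"
    by (rule rates.resolvent_second_moment[OF \<theta>(1)])
  also have "\<dots> \<le> count_sum (\<lambda>x. ennreal (\<pi> x) * ennreal (q x))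
      + 2 * count_sum (\<lambda>x. ennreal (\<pi> x) * ennreal (q x) ^ 2)"
    using \<theta>(2) mult_right_mono[of "ennreal \<theta>" 1] by (intro add_right_mono) auto
  finally show ?thesis .
qed

theorem num_jumps_second_moment:
  "\<exists>c::real. \<forall>t\<ge>0. num_jumps_sq_moment t \<le> ennreal (c * max 1 (t\<^sup>2))"
proof -
  have "count_sum (\<lambda>x. ennreal (\<pi> x) * ennreal (q x))
      + 2 * count_sum (\<lambda>x. ennreal (\<pi> x) * ennreal (q x) ^ 2) < \<top>"
    using count_sum_pi_total_rate count_sum_pi_total_rate_sq by (simp add: ennreal_mult_less_top)
  then obtain b where
    b: "count_sum (\<lambda>x. ennreal (\<pi> x) * ennreal (q x))
        + 2 * count_sum (\<lambda>x. ennreal (\<pi> x) * ennreal (q x) ^ 2) = ennreal b"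
    using less_top_ennreal by blast
  have "mono num_jumps_sq_moment"
    by (intro monoI nn_integral_mono power_mono num_jumps_mono) auto
  moreover have "ennreal (\<theta>\<^sup>2) *
      (\<integral>\<^sup>+\<sigma>. ennreal (\<theta> * exp (- \<theta> * \<sigma>)) * indicator {0..} \<sigma> * num_jumps_sq_moment \<sigma> \<partial>lborel)
      \<le> ennreal (b / \<pi> z0)" if "0 < \<theta>" "\<theta> \<le> 1" for \<theta>
  proof -
    have cancel: "ennreal b = ennreal (\<pi> z0) * ennreal (b / \<pi> z0)"
      using pi_initial_pos by (simp flip: ennreal_mult')
    show ?thesis
      using laplace_num_jumps_sq_moment_le[OF that] pi_initial_pos
      unfolding b cancel by (simp add: ennreal_mult_le_mult_iff)
  qed
  ultimately have "num_jumps_sq_moment t \<le> ennreal (exp 1 * (b / \<pi> z0) * max 1 (t\<^sup>2))" if "0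
      \<le> t" for t
    using that by (rule quadratic_bound_of_laplace_bound)
  then show ?thesis
    by blast
qed

end

theorem lemma3p2:
  fixes U :: "'u set" and \<kappa> :: "'u \<Rightarrow> real" and y y' :: "'u \<Rightarrow> 'd::finite \<Rightarrow> nat"
    and z0 :: "'d \<Rightarrow> nat" and \<pi> :: "('d \<Rightarrow> nat) \<Rightarrow> real"
    and M :: "'w measure" and Y :: "nat \<Rightarrow> 'w \<Rightarrow> ('d \<Rightarrow> nat)" and H :: "nat \<Rightarrow> 'w \<Rightarrow> ennreal"
  assumes "finite U" and "\<forall>u\<in>U. 0 < \<kappa> u"
    and "prob_space M"
    and "ctmc_jump_hold M U \<kappa> y y' z0 Y H"
    and "\<forall>x x'. (react_step U \<kappa> y y')\<^sup>*\<^sup>* z0 x \<and> (react_step U \<kappa> y y')\<^sup>*\<^sup>* z0 x'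
               \<longrightarrow> (react_step U \<kappa> y y')\<^sup>*\<^sup>* x x'"
    and "ctmc_stationary U \<kappa> y y' {x. (react_step U \<kappa> y y')\<^sup>*\<^sup>* z0 x} \<pi>"
    and "(\<lambda>x. \<Sum>u\<in>U. (ma_rate \<kappa> y u x)\<^sup>2 * \<pi> x) summable_on UNIV"
  shows "\<exists>c::real. \<forall>t\<ge>0. (\<integral>\<^sup>+\<omega>. (num_jumps H t \<omega>)\<^sup>2 \<partial>M) \<le> ennreal (c * max 1 (t\<^sup>2))"
proof -
  interpret mass_action_process U \<kappa> y y' z0 \<pi> M Y H
    by (intro mass_action_process.intro mass_action_system.intro mass_action_process_axioms.intro)
        (fact assms)+
  show ?thesis
    by (rule num_jumps_second_moment)
qed

end
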